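(* Let $R$ be a ring with a separated Zariskian filtration $w:R\to\mathbb{Z}\cup\{\infty\}$, with Rees ring $\tilde R$, maps $\rho_1,\rho_2$, Ore sets $T$, $S$, $\tilde S$ and localisation map $\alpha$ as described in the context, and assume $sr\neq0$ for all $s\in S$ and nonzero $r\in R$. Then $\rho_1$ and $\rho_2$ extend to ring homomorphisms $\rho_1:\tilde S^{-1}\tilde R\to S^{-1}R$, $\tilde s^{-1}\tilde r\mapsto\rho_1(\tilde s)^{-1}\rho_1(\tilde r)$, and $\rho_2:\tilde S^{-1}\tilde R\to T^{-1}\mathrm{gr}_w(R)$, $\tilde s^{-1}\tilde r\mapsto \alpha(\rho_2(\tilde s))^{-1}\alpha(\rho_2(\tilde r))$, with kernels $(t-1)\tilde S^{-1}\tilde R$ and $t\tilde S^{-1}\tilde R$ respectively, and $\rho_2$ is graded.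
   Context: The filtration $w$ is descending with level sets $F_nR=\{r:w(r)\geq n\}$ and $\mathrm{gr}_w(R)=\bigoplus_nF_nR/F_{n+1}R$; for $r\ne0$, $\mathrm{gr}(r)=r+F_{w(r)+1}R$. The Rees ring is the graded ring $\tilde R=\bigoplus_{n\in\mathbb{Z}}F_nR\cdot t^{-n}$ with $(at^{-n})(bt^{-m})=abt^{-(n+m)}$, the element $rt^{-n}$ ($r\in F_nR$) having degree $n$; $t=1\cdot t^{1}$ is a central element of degree $-1$. Zariskian means $\tilde R$ is Noetherian and $F_1R$ is contained in the Jacobson radical of $F_0R$. $\rho_1:\tilde R\to R$ is the ring homomorphism $\sum r_nt^{-n}\mapsto\sum r_n$ and $\rho_2:\tilde R\to\mathrm{gr}_w(R)$ the graded homomorphism $rt^{-n}\mapsto r+F_{n+1}R$. $T$ is a multiplicatively closed, left Ore set of homogeneous elements of $\mathrm{gr}_w(R)$, $\alpha:\mathrm{gr}_w(R)\to T^{-1}\mathrm{gr}_w(R)$ the localisation map, $S=\{r\in R:\mathrm{gr}(r)\in T\}$ and $\tilde S=\{s\in\tilde R: s\text{ homogeneous},\ \rho_2(s)\in T\}$; $S$ and $\tilde S$ are left Ore sets in $R$ and $\tilde R$. Under the stated assumption $R\subseteq S^{-1}R$ and $\tilde R\subseteq\tilde S^{-1}\tilde R$, and $\tilde S^{-1}\tilde R$ is graded with degree-$n$ part $\{\tilde s^{-1}\tilde r:\tilde r\text{ homogeneous},\ \deg\tilde r-\deg\tilde s=n\}$. *)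

theory Defs
  imports "HOL-Algebra.Algebra" "HOL-Library.Extended_Real"
begin

definition filtration :: "('a, 'm) ring_scheme \<Rightarrow> ('a \<Rightarrow> ereal) \<Rightarrow> bool" where
  "filtration R w \<longleftrightarrow>
     (\<forall>r\<in>carrier R. w r = \<infinity> \<or> (\<exists>m::int. w r = ereal (real_of_int m))) \<and>
     w \<zero>\<^bsub>R\<^esub> = \<infinity> \<and>
     0 \<le> w \<one>\<^bsub>R\<^esub> \<and>
     (\<forall>x\<in>carrier R. w (\<ominus>\<^bsub>R\<^esub> x) = w x) \<and>
     (\<forall>x\<in>carrier R. \<forall>y\<in>carrier R. min (w x) (w y) \<le> w (x \<oplus>\<^bsub>R\<^esub> y)) \<and>
     (\<forall>x\<in>carrier R. \<forall>y\<in>carrier R. w x + w y \<le> w (x \<otimes>\<^bsub>R\<^esub> y))"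

definition separated :: "('a, 'm) ring_scheme \<Rightarrow> ('a \<Rightarrow> ereal) \<Rightarrow> bool" where
  "separated R w \<longleftrightarrow> (\<forall>r\<in>carrier R. w r = \<infinity> \<longrightarrow> r = \<zero>\<^bsub>R\<^esub>)"

definition Fl :: "('a, 'm) ring_scheme \<Rightarrow> ('a \<Rightarrow> ereal) \<Rightarrow> int \<Rightarrow> 'a set" where
  "Fl R w n = {r \<in> carrier R. ereal (real_of_int n) \<le> w r}"

text \<open>An element \<Sum> r_n t^{-n} is represented by its coefficient function n \<mapsto> r_n
  (finitely supported, r_n \<in> F_n R); the coefficient at n is the degree n component.\<close>
definition rees_ring :: "('a, 'm) ring_scheme \<Rightarrow> ('a \<Rightarrow> ereal) \<Rightarrow> (int \<Rightarrow> 'a) ring" where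
  "rees_ring R w =
    \<lparr>carrier = {f. (\<forall>n. f n \<in> Fl R w n) \<and> finite {n. f n \<noteq> \<zero>\<^bsub>R\<^esub>}},
     monoid.mult = (\<lambda>f g k. finsum R (\<lambda>n. f n \<otimes>\<^bsub>R\<^esub> g (k - n)) {n. f n \<noteq> \<zero>\<^bsub>R\<^esub>}),
     one = (\<lambda>n. if n = 0 then \<one>\<^bsub>R\<^esub> else \<zero>\<^bsub>R\<^esub>),
     ring.zero = (\<lambda>n. \<zero>\<^bsub>R\<^esub>),
     ring.add = (\<lambda>f g n. f n \<oplus>\<^bsub>R\<^esub> g n)\<rparr>"

text \<open>t = 1 * t^1, of degree -1.\<close>
definition rees_t :: "('a, 'm) ring_scheme \<Rightarrow> int \<Rightarrow> 'a" where
  "rees_t R = (\<lambda>n. if n = -1 then \<one>\<^bsub>R\<^esub> else \<zero>\<^bsub>R\<^esub>)"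

definition rees_homog :: "('a, 'm) ring_scheme \<Rightarrow> ('a \<Rightarrow> ereal) \<Rightarrow> (int \<Rightarrow> 'a) \<Rightarrow> int \<Rightarrow> bool" where
  "rees_homog R w f d \<longleftrightarrow> f \<in> carrier (rees_ring R w) \<and> (\<forall>n. n \<noteq> d \<longrightarrow> f n = \<zero>\<^bsub>R\<^esub>)"

text \<open>An element of gr_w(R) = \<Oplus>_n F_n/F_{n+1} is represented by the function n \<mapsto> its
  degree n component, a coset F_{n+1} + a with a \<in> F_n, almost all trivial.\<close>
definition gr_rep :: "('a, 'm) ring_scheme \<Rightarrow> ('a \<Rightarrow> ereal) \<Rightarrow> (int \<Rightarrow> 'a set) \<Rightarrow> int \<Rightarrow> 'a" where
  "gr_rep R w g n = (SOME a. a \<in> Fl R w n \<and> g n = Fl R w (n + 1) +>\<^bsub>R\<^esub> a)"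

definition gr_ring :: "('a, 'm) ring_scheme \<Rightarrow> ('a \<Rightarrow> ereal) \<Rightarrow> (int \<Rightarrow> 'a set) ring" where
  "gr_ring R w =
    \<lparr>carrier = {g. (\<forall>n. \<exists>a\<in>Fl R w n. g n = Fl R w (n + 1) +>\<^bsub>R\<^esub> a) \<and>
                   finite {n. g n \<noteq> Fl R w (n + 1)}},
     monoid.mult = (\<lambda>g h k. Fl R w (k + 1) +>\<^bsub>R\<^esub>
               finsum R (\<lambda>n. gr_rep R w g n \<otimes>\<^bsub>R\<^esub> gr_rep R w h (k - n)) {n. g n \<noteq> Fl R w (n + 1)}),
     one = (\<lambda>n. Fl R w (n + 1) +>\<^bsub>R\<^esub> (if n = 0 then \<one>\<^bsub>R\<^esub> else \<zero>\<^bsub>R\<^esub>)),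
     ring.zero = (\<lambda>n. Fl R w (n + 1)),
     ring.add = (\<lambda>g h n. Fl R w (n + 1) +>\<^bsub>R\<^esub> (gr_rep R w g n \<oplus>\<^bsub>R\<^esub> gr_rep R w h n))\<rparr>"

definition gr_homog :: "('a, 'm) ring_scheme \<Rightarrow> ('a \<Rightarrow> ereal) \<Rightarrow> (int \<Rightarrow> 'a set) \<Rightarrow> int \<Rightarrow> bool" where
  "gr_homog R w g d \<longleftrightarrow> g \<in> carrier (gr_ring R w) \<and> (\<forall>n. n \<noteq> d \<longrightarrow> g n = Fl R w (n + 1))"

text \<open>gr(r) = r + F_{w(r)+1} R, placed in degree w(r) (used for r \<noteq> 0).\<close>
definition gr_elt :: "('a, 'm) ring_scheme \<Rightarrow> ('a \<Rightarrow> ereal) \<Rightarrow> 'a \<Rightarrow> int \<Rightarrow> 'a set" where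
  "gr_elt R w r = (\<lambda>n. if w r = ereal (real_of_int n) then Fl R w (n + 1) +>\<^bsub>R\<^esub> r else Fl R w (n + 1))"

definition rho1 :: "('a, 'm) ring_scheme \<Rightarrow> (int \<Rightarrow> 'a) \<Rightarrow> 'a" where
  "rho1 R f = finsum R f {n. f n \<noteq> \<zero>\<^bsub>R\<^esub>}"

definition rho2 :: "('a, 'm) ring_scheme \<Rightarrow> ('a \<Rightarrow> ereal) \<Rightarrow> (int \<Rightarrow> 'a) \<Rightarrow> int \<Rightarrow> 'a set" where
  "rho2 R w f = (\<lambda>n. Fl R w (n + 1) +>\<^bsub>R\<^esub> f n)"

definition left_ideal :: "('a, 'm) ring_scheme \<Rightarrow> 'a set \<Rightarrow> bool" where
  "left_ideal A I \<longleftrightarrow> I \<subseteq> carrier A \<and> subgroup I (add_monoid A) \<and>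
     (\<forall>a\<in>carrier A. \<forall>x\<in>I. a \<otimes>\<^bsub>A\<^esub> x \<in> I)"

definition right_ideal :: "('a, 'm) ring_scheme \<Rightarrow> 'a set \<Rightarrow> bool" where
  "right_ideal A I \<longleftrightarrow> I \<subseteq> carrier A \<and> subgroup I (add_monoid A) \<and>
     (\<forall>a\<in>carrier A. \<forall>x\<in>I. x \<otimes>\<^bsub>A\<^esub> a \<in> I)"

definition left_noetherian :: "('a, 'm) ring_scheme \<Rightarrow> bool" where
  "left_noetherian A \<longleftrightarrow> (\<forall>I :: nat \<Rightarrow> 'a set.
     (\<forall>n. left_ideal A (I n)) \<and> (\<forall>n. I n \<subseteq> I (Suc n)) \<longrightarrow> (\<exists>N. \<forall>n\<ge>N. I n = I N))"

definition right_noetherian :: "('a, 'm) ring_scheme \<Rightarrow> bool" where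
  "right_noetherian A \<longleftrightarrow> (\<forall>I :: nat \<Rightarrow> 'a set.
     (\<forall>n. right_ideal A (I n)) \<and> (\<forall>n. I n \<subseteq> I (Suc n)) \<longrightarrow> (\<exists>N. \<forall>n\<ge>N. I n = I N))"

definition maximal_left_ideal :: "('a, 'm) ring_scheme \<Rightarrow> 'a set \<Rightarrow> bool" where
  "maximal_left_ideal A M \<longleftrightarrow> left_ideal A M \<and> M \<noteq> carrier A \<and>
     (\<forall>J. left_ideal A J \<and> M \<subseteq> J \<longrightarrow> J = M \<or> J = carrier A)"

definition jacobson_radical :: "('a, 'm) ring_scheme \<Rightarrow> 'a set" where
  "jacobson_radical A = carrier A \<inter> \<Inter> {M. maximal_left_ideal A M}"

definition zariskian :: "('a, 'm) ring_scheme \<Rightarrow> ('a \<Rightarrow> ereal) \<Rightarrow> bool" where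
  "zariskian R w \<longleftrightarrow> left_noetherian (rees_ring R w) \<and> right_noetherian (rees_ring R w) \<and>
     Fl R w 1 \<subseteq> jacobson_radical (R\<lparr>carrier := Fl R w 0\<rparr>)"

definition mult_closed :: "('a, 'm) ring_scheme \<Rightarrow> 'a set \<Rightarrow> bool" where
  "mult_closed A T \<longleftrightarrow> T \<subseteq> carrier A \<and> \<one>\<^bsub>A\<^esub> \<in> T \<and> (\<forall>x\<in>T. \<forall>y\<in>T. x \<otimes>\<^bsub>A\<^esub> y \<in> T)"

definition left_ore :: "('a, 'm) ring_scheme \<Rightarrow> 'a set \<Rightarrow> bool" where
  "left_ore A T \<longleftrightarrow> (\<forall>s\<in>T. \<forall>r\<in>carrier A. \<exists>s'\<in>T. \<exists>r'\<in>carrier A. s' \<otimes>\<^bsub>A\<^esub> r = r' \<otimes>\<^bsub>A\<^esub> s)"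

definition left_ring_of_fractions ::
  "('a, 'm) ring_scheme \<Rightarrow> 'a set \<Rightarrow> ('b, 'n) ring_scheme \<Rightarrow> ('a \<Rightarrow> 'b) \<Rightarrow> bool" where
  "left_ring_of_fractions A S Q phi \<longleftrightarrow> ring Q \<and> phi \<in> ring_hom A Q \<and>
     (\<forall>s\<in>S. phi s \<in> Units Q) \<and>
     (\<forall>q\<in>carrier Q. \<exists>s\<in>S. \<exists>r\<in>carrier A. q = inv\<^bsub>Q\<^esub> (phi s) \<otimes>\<^bsub>Q\<^esub> phi r) \<and>
     (\<forall>r\<in>carrier A. phi r = \<zero>\<^bsub>Q\<^esub> \<longleftrightarrow> (\<exists>s\<in>S. s \<otimes>\<^bsub>A\<^esub> r = \<zero>\<^bsub>A\<^esub>))"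

definition frac_deg_part ::
  "('b, 'n) ring_scheme \<Rightarrow> ('a \<Rightarrow> 'b) \<Rightarrow> 'a set \<Rightarrow> ('a \<Rightarrow> int \<Rightarrow> bool) \<Rightarrow> int \<Rightarrow> 'b set" where
  "frac_deg_part Q phi S homd n =
     {inv\<^bsub>Q\<^esub> (phi s) \<otimes>\<^bsub>Q\<^esub> phi r | s r d. s \<in> S \<and> homd s d \<and> homd r (d + n)}"

definition S_set :: "('a, 'm) ring_scheme \<Rightarrow> ('a \<Rightarrow> ereal) \<Rightarrow> (int \<Rightarrow> 'a set) set \<Rightarrow> 'a set" where
  "S_set R w T = {r \<in> carrier R. r \<noteq> \<zero>\<^bsub>R\<^esub> \<and> gr_elt R w r \<in> T}"

definition St_set :: "('a, 'm) ring_scheme \<Rightarrow> ('a \<Rightarrow> ereal) \<Rightarrow> (int \<Rightarrow> 'a set) set \<Rightarrow> (int \<Rightarrow> 'a) set" where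
  "St_set R w T = {s \<in> carrier (rees_ring R w). (\<exists>d. rees_homog R w s d) \<and> rho2 R w s \<in> T}"

end

theory Submission
  imports Defs
begin

(* Both maps come from the universal property of the left Ore localisation of the Rees ring:
   rho1 and rho2 send the denominators S~ to units (a homogeneous s with rho2 s in T has a single
   nonzero coefficient, and it lies in S), so they factor through S~^-1 R~, and a fraction
   s^-1 r is killed exactly when the image of r is.  If rho1 r = 0 (which is what
   phi (rho1 r) = 0 means, S being regular), then r = (t - 1) y where y collects the negated tail
   sums of the coefficients of r.  If alpha (rho2 r) = 0, some homogeneous s' in S~ has
   rho2 (s' r) = 0, i.e. every coefficient of s' r lies one filtration step deeper, so
   s' r = t y.  Since t is central, the kernels are the principal ideals generated by t - 1
   and t. *)

lemma (in monoid) inv_mult_Units: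
  assumes "x \<in> Units G" and "y \<in> Units G"
  shows "inv (x \<otimes> y) = inv y \<otimes> inv x"
proof -
  have "(x \<otimes> y) \<otimes> (inv y \<otimes> inv x) = \<one>" "(inv y \<otimes> inv x) \<otimes> (x \<otimes> y) = \<one>"
    using assms by (simp_all add: m_assoc Units_closed flip: m_assoc[of y "inv y"] m_assoc[of "inv x" x])
  then show ?thesis using assms by (intro inv_unique'[symmetric]) auto
qed

lemma (in monoid) Units_inv_commute:
  assumes u: "u \<in> Units G" and c: "c \<in> carrier G" and cu: "c \<otimes> u = u \<otimes> c"
  shows "inv u \<otimes> c = c \<otimes> inv u"
proof -
  have "inv u \<otimes> c = inv u \<otimes> (c \<otimes> u) \<otimes> inv u"
    using u c by (simp add: m_assoc Units_closed)
  also have "\<dots> = c \<otimes> inv u"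
    using u c by (simp add: cu m_assoc[symmetric] Units_closed)
  finally show ?thesis .
qed

lemma (in monoid) Units_inv_cancel_mid:
  assumes "u \<in> Units G" and "a \<in> carrier G" and "b \<in> carrier G"
  shows "(a \<otimes> u) \<otimes> (inv u \<otimes> b) = a \<otimes> b"
  using assms by (simp add: m_assoc Units_closed flip: m_assoc[of u "inv u"])

lemma ring_hom_zero_abelian_group:
  assumes h: "h \<in> ring_hom A B" and A: "abelian_group A" and B: "ring B"
  shows "h \<zero>\<^bsub>A\<^esub> = \<zero>\<^bsub>B\<^esub>"
proof -
  interpret A: abelian_group A by (rule A)
  interpret B: ring B by (rule B)
  have "h \<zero>\<^bsub>A\<^esub> \<oplus>\<^bsub>B\<^esub> h \<zero>\<^bsub>A\<^esub> = h \<zero>\<^bsub>A\<^esub> \<oplus>\<^bsub>B\<^esub> \<zero>\<^bsub>B\<^esub>"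
    using ring_hom_add[OF h, of "\<zero>\<^bsub>A\<^esub>" "\<zero>\<^bsub>A\<^esub>"] ring_hom_closed[OF h A.zero_closed] by simp
  then show ?thesis using ring_hom_closed[OF h A.zero_closed] by simp
qed

lemma (in abelian_monoid) finsum_swap:
  assumes A: "finite A" and B: "finite B" and f: "\<And>i j. i \<in> A \<Longrightarrow> j \<in> B \<Longrightarrow> f i j \<in> carrier G"
  shows "(\<Oplus>i\<in>A. \<Oplus>j\<in>B. f i j) = (\<Oplus>j\<in>B. \<Oplus>i\<in>A. f i j)"
  using A f
proof (induction A rule: finite_induct)
  case (insert x F)
  have "(\<Oplus>i\<in>insert x F. \<Oplus>j\<in>B. f i j) = (\<Oplus>j\<in>B. f x j) \<oplus> (\<Oplus>j\<in>B. \<Oplus>i\<in>F. f i j)"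
    using insert by (simp add: finsum_insert Pi_iff)
  also have "\<dots> = (\<Oplus>j\<in>B. f x j \<oplus> (\<Oplus>i\<in>F. f i j))"
    using insert.prems by (subst finsum_addf) (auto intro!: finsum_closed)
  also have "\<dots> = (\<Oplus>j\<in>B. \<Oplus>i\<in>insert x F. f i j)"
    using insert.hyps insert.prems by (intro finsum_cong) (auto simp: finsum_insert)
  finally show ?case .
qed (simp add: finsum_zero)

lemma (in abelian_group) finsum_diff:
  assumes A: "finite A" and f: "f \<in> A \<rightarrow> carrier G" and g: "g \<in> A \<rightarrow> carrier G"
  shows "finsum G f A \<ominus> finsum G g A = (\<Oplus>i\<in>A. f i \<ominus> g i)"
proof -
  have "finsum G f A = (\<Oplus>i\<in>A. (f i \<ominus> g i) \<oplus> g i)"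
    using f g by (intro finsum_cong') (auto simp: minus_eq a_assoc l_neg Pi_iff)
  also have "\<dots> = (\<Oplus>i\<in>A. f i \<ominus> g i) \<oplus> finsum G g A"
    using f g by (simp add: finsum_addf Pi_iff)
  moreover have "(x \<oplus> y) \<ominus> y = x" if "x \<in> carrier G" "y \<in> carrier G" for x y
    using that by (simp add: minus_eq a_assoc r_neg)
  ultimately show ?thesis
    using f g by (simp add: Pi_iff)
qed

section \<open>Left rings of fractions\<close>

locale left_fractions =
  A: abelian_group A + Q: ring Q
  for A :: "('a, 'm) ring_scheme" and Q :: "('b, 'n) ring_scheme" +
  fixes S :: "'a set" and lam :: "'a \<Rightarrow> 'b"
  assumes m_closed_A: "\<lbrakk>a \<in> carrier A; b \<in> carrier A\<rbrakk> \<Longrightarrow> a \<otimes>\<^bsub>A\<^esub> b \<in> carrier A"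
    and mult_closed_S: "mult_closed A S"
    and fractions: "left_ring_of_fractions A S Q lam"
begin

lemma S_carrier: "s \<in> S \<Longrightarrow> s \<in> carrier A"
  and one_S: "\<one>\<^bsub>A\<^esub> \<in> S"
  and S_mult: "s \<in> S \<Longrightarrow> s' \<in> S \<Longrightarrow> s \<otimes>\<^bsub>A\<^esub> s' \<in> S"
  using mult_closed_S by (auto simp: mult_closed_def)

lemma lam_hom: "lam \<in> ring_hom A Q"
  and lam_Units: "s \<in> S \<Longrightarrow> lam s \<in> Units Q"
  and lam_eq_zero_iff: "r \<in> carrier A \<Longrightarrow> lam r = \<zero>\<^bsub>Q\<^esub> \<longleftrightarrow> (\<exists>s\<in>S. s \<otimes>\<^bsub>A\<^esub> r = \<zero>\<^bsub>A\<^esub>)"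
  using fractions by (auto simp: left_ring_of_fractions_def)

lemma lam_closed: "a \<in> carrier A \<Longrightarrow> lam a \<in> carrier Q"
  by (rule ring_hom_closed[OF lam_hom])

lemma lam_mult: "a \<in> carrier A \<Longrightarrow> b \<in> carrier A \<Longrightarrow> lam (a \<otimes>\<^bsub>A\<^esub> b) = lam a \<otimes>\<^bsub>Q\<^esub> lam b"
  by (rule ring_hom_mult[OF lam_hom])

lemma lam_add: "a \<in> carrier A \<Longrightarrow> b \<in> carrier A \<Longrightarrow> lam (a \<oplus>\<^bsub>A\<^esub> b) = lam a \<oplus>\<^bsub>Q\<^esub> lam b"
  by (rule ring_hom_add[OF lam_hom])

lemma fraction_eq_iff:
  assumes "s \<in> S" and "r \<in> carrier A" and "q \<in> carrier Q"
  shows "q = inv\<^bsub>Q\<^esub> (lam s) \<otimes>\<^bsub>Q\<^esub> lam r \<longleftrightarrow> lam s \<otimes>\<^bsub>Q\<^esub> q = lam r"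
proof -
  have U: "lam s \<in> Units Q" by (rule lam_Units[OF assms(1)])
  show ?thesis
  proof
    assume "q = inv\<^bsub>Q\<^esub> (lam s) \<otimes>\<^bsub>Q\<^esub> lam r"
    then show "lam s \<otimes>\<^bsub>Q\<^esub> q = lam r"
      using U lam_closed[OF assms(2)] by (simp add: Q.m_assoc[symmetric] Q.Units_closed)
  next
    assume "lam s \<otimes>\<^bsub>Q\<^esub> q = lam r"
    then show "q = inv\<^bsub>Q\<^esub> (lam s) \<otimes>\<^bsub>Q\<^esub> lam r"
      using U assms(3) by (simp add: Q.m_assoc[symmetric] Q.Units_closed flip: \<open>lam s \<otimes>\<^bsub>Q\<^esub> q = lam r\<close>)
  qed
qed

lemma fraction_exists:
  assumes "q \<in> carrier Q"
  shows "\<exists>s\<in>S. \<exists>r\<in>carrier A. lam s \<otimes>\<^bsub>Q\<^esub> q = lam r"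
  using fractions assms fraction_eq_iff by (fastforce simp: left_ring_of_fractions_def)

lemma lam_Ore:
  assumes a: "a \<in> carrier A" and s: "s \<in> S"
  shows "\<exists>u\<in>S. \<exists>v\<in>carrier A. lam (u \<otimes>\<^bsub>A\<^esub> a) = lam (v \<otimes>\<^bsub>A\<^esub> s)"
proof -
  have Us: "lam s \<in> Units Q" by (rule lam_Units[OF s])
  obtain u v where u: "u \<in> S" and v: "v \<in> carrier A"
    and uv: "lam u \<otimes>\<^bsub>Q\<^esub> (lam a \<otimes>\<^bsub>Q\<^esub> inv\<^bsub>Q\<^esub> (lam s)) = lam v"
    using fraction_exists[of "lam a \<otimes>\<^bsub>Q\<^esub> inv\<^bsub>Q\<^esub> (lam s)"] Us lam_closed[OF a] by auto
  have "lam (u \<otimes>\<^bsub>A\<^esub> a) = lam v \<otimes>\<^bsub>Q\<^esub> lam s"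
    using Us a u S_carrier lam_closed
    by (simp add: lam_mult flip: uv) (simp add: Q.m_assoc Q.Units_closed)
  then show ?thesis using u v S_carrier[OF s] by (auto simp: lam_mult)
qed

end

locale left_fractions_lift = left_fractions A Q S lam + Q': ring Q'
  for A :: "('a, 'm) ring_scheme" and Q :: "('b, 'n) ring_scheme" and S lam
    and Q' :: "('c, 'p) ring_scheme" +
  fixes psi :: "'a \<Rightarrow> 'c"
  assumes psi_hom: "psi \<in> ring_hom A Q'"
    and psi_Units: "s \<in> S \<Longrightarrow> psi s \<in> Units Q'"
begin

lemma psi_closed: "a \<in> carrier A \<Longrightarrow> psi a \<in> carrier Q'"
  by (rule ring_hom_closed[OF psi_hom])

lemma psi_mult: "a \<in> carrier A \<Longrightarrow> b \<in> carrier A \<Longrightarrow> psi (a \<otimes>\<^bsub>A\<^esub> b) = psi a \<otimes>\<^bsub>Q'\<^esub> psi b"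
  by (rule ring_hom_mult[OF psi_hom])

lemma psi_add: "a \<in> carrier A \<Longrightarrow> b \<in> carrier A \<Longrightarrow> psi (a \<oplus>\<^bsub>A\<^esub> b) = psi a \<oplus>\<^bsub>Q'\<^esub> psi b"
  by (rule ring_hom_add[OF psi_hom])

lemma psi_eq_if_lam_eq:
  assumes a: "a \<in> carrier A" and b: "b \<in> carrier A" and ab: "lam a = lam b"
  shows "psi a = psi b"
proof -
  have d: "a \<ominus>\<^bsub>A\<^esub> b \<in> carrier A" and a_eq: "a = (a \<ominus>\<^bsub>A\<^esub> b) \<oplus>\<^bsub>A\<^esub> b"
    using a b by (simp_all add: A.minus_eq A.a_assoc A.l_neg)
  have "lam (a \<ominus>\<^bsub>A\<^esub> b) \<oplus>\<^bsub>Q\<^esub> lam b = \<zero>\<^bsub>Q\<^esub> \<oplus>\<^bsub>Q\<^esub> lam b"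
    using lam_add[OF d b] a_eq ab lam_closed[OF b] by simp
  then have "lam (a \<ominus>\<^bsub>A\<^esub> b) = \<zero>\<^bsub>Q\<^esub>"
    using lam_closed[OF b] lam_closed[OF d] by (simp add: Q.add.right_cancel)
  then obtain s where s: "s \<in> S" and sd: "s \<otimes>\<^bsub>A\<^esub> (a \<ominus>\<^bsub>A\<^esub> b) = \<zero>\<^bsub>A\<^esub>"
    using lam_eq_zero_iff[OF d] by blast
  have "psi s \<otimes>\<^bsub>Q'\<^esub> psi (a \<ominus>\<^bsub>A\<^esub> b) = psi \<zero>\<^bsub>A\<^esub>"
    using psi_mult[OF S_carrier[OF s] d] sd by simp
  also have "\<dots> = psi s \<otimes>\<^bsub>Q'\<^esub> \<zero>\<^bsub>Q'\<^esub>"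
    using ring_hom_zero_abelian_group[OF psi_hom A.abelian_group_axioms Q'.ring_axioms]
      psi_closed[OF S_carrier[OF s]] by simp
  finally have "psi s \<otimes>\<^bsub>Q'\<^esub> psi (a \<ominus>\<^bsub>A\<^esub> b) = psi s \<otimes>\<^bsub>Q'\<^esub> \<zero>\<^bsub>Q'\<^esub>" .
  then have "psi (a \<ominus>\<^bsub>A\<^esub> b) = \<zero>\<^bsub>Q'\<^esub>"
    using psi_Units[OF s] psi_closed[OF d] by simp
  then show ?thesis using psi_add[OF d b] a_eq psi_closed[OF b] by simp
qed

lemma lift_well_defined:
  assumes s: "s \<in> S" and r: "r \<in> carrier A" and s': "s' \<in> S" and r': "r' \<in> carrier A"
    and q: "q \<in> carrier Q" and sq: "lam s \<otimes>\<^bsub>Q\<^esub> q = lam r" and s'q: "lam s' \<otimes>\<^bsub>Q\<^esub> q = lam r'"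
  shows "inv\<^bsub>Q'\<^esub> (psi s) \<otimes>\<^bsub>Q'\<^esub> psi r = inv\<^bsub>Q'\<^esub> (psi s') \<otimes>\<^bsub>Q'\<^esub> psi r'"
proof -
  obtain u v where u: "u \<in> S" and v: "v \<in> carrier A" and uv: "lam (u \<otimes>\<^bsub>A\<^esub> s') = lam (v \<otimes>\<^bsub>A\<^esub> s)"
    using lam_Ore[OF S_carrier[OF s'] s] by blast
  have "lam (u \<otimes>\<^bsub>A\<^esub> r') = lam (u \<otimes>\<^bsub>A\<^esub> s') \<otimes>\<^bsub>Q\<^esub> q"
    using u s' q S_carrier lam_closed by (simp add: lam_mult r' Q.m_assoc flip: s'q)
  also have "\<dots> = lam (v \<otimes>\<^bsub>A\<^esub> r)"
    using v s q S_carrier lam_closed by (simp add: uv lam_mult r Q.m_assoc flip: sq)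
  finally have ur': "psi u \<otimes>\<^bsub>Q'\<^esub> psi r' = psi v \<otimes>\<^bsub>Q'\<^esub> psi r"
    using psi_eq_if_lam_eq[of "u \<otimes>\<^bsub>A\<^esub> r'" "v \<otimes>\<^bsub>A\<^esub> r"] u v r r' S_carrier m_closed_A
    by (simp add: psi_mult)
  have us': "psi u \<otimes>\<^bsub>Q'\<^esub> psi s' = psi v \<otimes>\<^bsub>Q'\<^esub> psi s"
    using psi_eq_if_lam_eq[OF _ _ uv] u v s s' S_carrier m_closed_A by (simp add: psi_mult)
  have U: "psi u \<in> Units Q'" "psi s \<in> Units Q'" "psi s' \<in> Units Q'"
    using psi_Units u s s' by auto
  have "(psi u \<otimes>\<^bsub>Q'\<^esub> psi s') \<otimes>\<^bsub>Q'\<^esub> (inv\<^bsub>Q'\<^esub> (psi s) \<otimes>\<^bsub>Q'\<^esub> psi r)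
      = psi v \<otimes>\<^bsub>Q'\<^esub> psi r"
    using Q'.Units_inv_cancel_mid[OF U(2)] psi_closed r v by (simp add: us')
  also have "\<dots> = (psi u \<otimes>\<^bsub>Q'\<^esub> psi s') \<otimes>\<^bsub>Q'\<^esub> (inv\<^bsub>Q'\<^esub> (psi s') \<otimes>\<^bsub>Q'\<^esub> psi r')"
    using Q'.Units_inv_cancel_mid[OF U(3)] psi_closed r' U(1) by (simp add: ur' Q'.Units_closed)
  finally show ?thesis
    using U psi_closed r r' by (simp add: Q'.Units_closed)
qed

definition lift :: "'b \<Rightarrow> 'c" where
  "lift q = (SOME x. \<exists>s\<in>S. \<exists>r\<in>carrier A. lam s \<otimes>\<^bsub>Q\<^esub> q = lam r \<and> x = inv\<^bsub>Q'\<^esub> (psi s) \<otimes>\<^bsub>Q'\<^esub> psi r)"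

lemma lift_eq:
  assumes "s \<in> S" and "r \<in> carrier A" and "q \<in> carrier Q" and "lam s \<otimes>\<^bsub>Q\<^esub> q = lam r"
  shows "lift q = inv\<^bsub>Q'\<^esub> (psi s) \<otimes>\<^bsub>Q'\<^esub> psi r"
  unfolding lift_def
proof (rule someI2)
  show "\<exists>s'\<in>S. \<exists>r'\<in>carrier A. lam s' \<otimes>\<^bsub>Q\<^esub> q = lam r'
          \<and> inv\<^bsub>Q'\<^esub> (psi s) \<otimes>\<^bsub>Q'\<^esub> psi r = inv\<^bsub>Q'\<^esub> (psi s') \<otimes>\<^bsub>Q'\<^esub> psi r'"
    using assms by blast
qed (use assms lift_well_defined in metis)

lemma lift_closed:
  assumes q: "q \<in> carrier Q"
  shows "lift q \<in> carrier Q'"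
proof -
  obtain s r where s: "s \<in> S" and r: "r \<in> carrier A" and sq: "lam s \<otimes>\<^bsub>Q\<^esub> q = lam r"
    using fraction_exists[OF q] by blast
  show ?thesis
    using lift_eq[OF s r q sq] psi_Units[OF s] psi_closed[OF r] by (simp add: Q'.Units_closed)
qed

lemma lift_add:
  assumes q1: "q1 \<in> carrier Q" and q2: "q2 \<in> carrier Q"
  shows "lift (q1 \<oplus>\<^bsub>Q\<^esub> q2) = lift q1 \<oplus>\<^bsub>Q'\<^esub> lift q2"
proof -
  obtain s1 r1 where s1: "s1 \<in> S" and r1: "r1 \<in> carrier A" and sq1: "lam s1 \<otimes>\<^bsub>Q\<^esub> q1 = lam r1"
    using fraction_exists[OF q1] by blast
  obtain s2 r2 where s2: "s2 \<in> S" and r2: "r2 \<in> carrier A" and sq2: "lam s2 \<otimes>\<^bsub>Q\<^esub> q2 = lam r2"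
    using fraction_exists[OF q2] by blast
  obtain u v where u: "u \<in> S" and v: "v \<in> carrier A" and uv: "lam (u \<otimes>\<^bsub>A\<^esub> s2) = lam (v \<otimes>\<^bsub>A\<^esub> s1)"
    using lam_Ore[OF S_carrier[OF s2] s1] by blast
  define m where "m = u \<otimes>\<^bsub>A\<^esub> s2"
  have m: "m \<in> S" unfolding m_def using u s2 by (rule S_mult)
  have C: "u \<in> carrier A" "s1 \<in> carrier A" "s2 \<in> carrier A" "v \<otimes>\<^bsub>A\<^esub> r1 \<in> carrier A" "u \<otimes>\<^bsub>A\<^esub> r2 \<in> carrier A"
    using u s1 s2 v r1 r2 S_carrier m_closed_A by auto
  have mq1: "lam m \<otimes>\<^bsub>Q\<^esub> q1 = lam (v \<otimes>\<^bsub>A\<^esub> r1)"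
    using C v r1 q1 lam_closed by (simp add: m_def uv lam_mult Q.m_assoc flip: sq1)
  have mq2: "lam m \<otimes>\<^bsub>Q\<^esub> q2 = lam (u \<otimes>\<^bsub>A\<^esub> r2)"
    using C r2 q2 lam_closed by (simp add: m_def lam_mult Q.m_assoc flip: sq2)
  have "lam m \<otimes>\<^bsub>Q\<^esub> (q1 \<oplus>\<^bsub>Q\<^esub> q2) = lam (v \<otimes>\<^bsub>A\<^esub> r1 \<oplus>\<^bsub>A\<^esub> u \<otimes>\<^bsub>A\<^esub> r2)"
    using C q1 q2 lam_closed[OF S_carrier[OF m]] by (simp add: Q.r_distr mq1 mq2 lam_add)
  then have "lift (q1 \<oplus>\<^bsub>Q\<^esub> q2) = inv\<^bsub>Q'\<^esub> (psi m) \<otimes>\<^bsub>Q'\<^esub> psi (v \<otimes>\<^bsub>A\<^esub> r1 \<oplus>\<^bsub>A\<^esub> u \<otimes>\<^bsub>A\<^esub> r2)"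
    using C q1 q2 m by (intro lift_eq) auto
  also have "\<dots> = inv\<^bsub>Q'\<^esub> (psi m) \<otimes>\<^bsub>Q'\<^esub> psi (v \<otimes>\<^bsub>A\<^esub> r1) \<oplus>\<^bsub>Q'\<^esub> inv\<^bsub>Q'\<^esub> (psi m) \<otimes>\<^bsub>Q'\<^esub> psi (u \<otimes>\<^bsub>A\<^esub> r2)"
    using C psi_closed psi_Units[OF m] by (simp add: psi_add Q'.r_distr Q'.Units_closed)
  also have "\<dots> = lift q1 \<oplus>\<^bsub>Q'\<^esub> lift q2"
    using lift_eq[OF m C(4) q1 mq1] lift_eq[OF m C(5) q2 mq2] by simp
  finally show ?thesis .
qed

lemma lift_mult:
  assumes q1: "q1 \<in> carrier Q" and q2: "q2 \<in> carrier Q"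
  shows "lift (q1 \<otimes>\<^bsub>Q\<^esub> q2) = lift q1 \<otimes>\<^bsub>Q'\<^esub> lift q2"
proof -
  obtain s1 r1 where s1: "s1 \<in> S" and r1: "r1 \<in> carrier A" and sq1: "lam s1 \<otimes>\<^bsub>Q\<^esub> q1 = lam r1"
    using fraction_exists[OF q1] by blast
  obtain s2 r2 where s2: "s2 \<in> S" and r2: "r2 \<in> carrier A" and sq2: "lam s2 \<otimes>\<^bsub>Q\<^esub> q2 = lam r2"
    using fraction_exists[OF q2] by blast
  obtain u v where u: "u \<in> S" and v: "v \<in> carrier A" and uv: "lam (u \<otimes>\<^bsub>A\<^esub> r1) = lam (v \<otimes>\<^bsub>A\<^esub> s2)"
    using lam_Ore[OF r1 s2] by blast
  have C: "u \<in> carrier A" "s1 \<in> carrier A" "s2 \<in> carrier A" "v \<otimes>\<^bsub>A\<^esub> r2 \<in> carrier A"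
    using u s1 s2 v r2 S_carrier m_closed_A by auto
  have U: "psi u \<in> Units Q'" "psi s1 \<in> Units Q'" "psi s2 \<in> Units Q'"
    using psi_Units u s1 s2 by auto
  have "lam (u \<otimes>\<^bsub>A\<^esub> s1) \<otimes>\<^bsub>Q\<^esub> (q1 \<otimes>\<^bsub>Q\<^esub> q2) = lam (u \<otimes>\<^bsub>A\<^esub> r1) \<otimes>\<^bsub>Q\<^esub> q2"
    using C r1 q1 q2 lam_closed by (simp add: lam_mult Q.m_assoc flip: sq1)
  also have "\<dots> = lam (v \<otimes>\<^bsub>A\<^esub> r2)"
    using C v r2 q2 lam_closed by (simp add: uv lam_mult Q.m_assoc flip: sq2)
  finally have "lift (q1 \<otimes>\<^bsub>Q\<^esub> q2) = inv\<^bsub>Q'\<^esub> (psi (u \<otimes>\<^bsub>A\<^esub> s1)) \<otimes>\<^bsub>Q'\<^esub> psi (v \<otimes>\<^bsub>A\<^esub> r2)"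
    using C q1 q2 u s1 by (intro lift_eq) (auto intro: S_mult)
  also have "\<dots> = inv\<^bsub>Q'\<^esub> (psi s1) \<otimes>\<^bsub>Q'\<^esub> (inv\<^bsub>Q'\<^esub> (psi u) \<otimes>\<^bsub>Q'\<^esub> psi v) \<otimes>\<^bsub>Q'\<^esub> psi r2"
    using C U v r2 psi_closed by (simp add: psi_mult Q'.inv_mult_Units Q'.m_assoc Q'.Units_closed)
  also have "inv\<^bsub>Q'\<^esub> (psi u) \<otimes>\<^bsub>Q'\<^esub> psi v = psi r1 \<otimes>\<^bsub>Q'\<^esub> inv\<^bsub>Q'\<^esub> (psi s2)"
  proof -
    have "psi u \<otimes>\<^bsub>Q'\<^esub> psi r1 = psi v \<otimes>\<^bsub>Q'\<^esub> psi s2"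
      using psi_eq_if_lam_eq[OF _ _ uv] C v r1 m_closed_A by (simp add: psi_mult)
    then have "psi v = psi u \<otimes>\<^bsub>Q'\<^esub> psi r1 \<otimes>\<^bsub>Q'\<^esub> inv\<^bsub>Q'\<^esub> (psi s2)"
      using U v psi_closed by (simp add: Q'.m_assoc Q'.Units_closed)
    then have "psi v = psi u \<otimes>\<^bsub>Q'\<^esub> (psi r1 \<otimes>\<^bsub>Q'\<^esub> inv\<^bsub>Q'\<^esub> (psi s2))"
      using U r1 psi_closed by (simp add: Q'.m_assoc Q'.Units_closed)
    then show ?thesis
      using U r1 psi_closed by (simp add: Q'.m_assoc[symmetric] Q'.Units_closed)
  qed
  also have "inv\<^bsub>Q'\<^esub> (psi s1) \<otimes>\<^bsub>Q'\<^esub> (psi r1 \<otimes>\<^bsub>Q'\<^esub> inv\<^bsub>Q'\<^esub> (psi s2)) \<otimes>\<^bsub>Q'\<^esub> psi r2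
      = lift q1 \<otimes>\<^bsub>Q'\<^esub> lift q2"
    using lift_eq[OF s1 r1 q1 sq1] lift_eq[OF s2 r2 q2 sq2] U r1 r2 psi_closed
    by (simp add: Q'.m_assoc Q'.Units_closed)
  finally show ?thesis .
qed

lemma lift_lam:
  assumes a: "a \<in> carrier A"
  shows "lift (lam a) = psi a"
proof -
  have "lam \<one>\<^bsub>A\<^esub> \<otimes>\<^bsub>Q\<^esub> lam a = lam a"
    using lam_closed[OF a] by (simp add: ring_hom_one[OF lam_hom])
  then show ?thesis
    using lift_eq[OF one_S a lam_closed[OF a]] psi_closed[OF a] by (simp add: ring_hom_one[OF psi_hom])
qed

lemma lift_ring_hom: "lift \<in> ring_hom Q Q'"
proof (rule ring_hom_memI)
  show "lift \<one>\<^bsub>Q\<^esub> = \<one>\<^bsub>Q'\<^esub>"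
    using lift_lam[OF S_carrier[OF one_S]] by (simp add: ring_hom_one[OF lam_hom] ring_hom_one[OF psi_hom])
qed (simp_all add: lift_closed lift_add lift_mult)

lemma lift_fraction:
  assumes "s \<in> S" and "r \<in> carrier A"
  shows "lift (inv\<^bsub>Q\<^esub> (lam s) \<otimes>\<^bsub>Q\<^esub> lam r) = inv\<^bsub>Q'\<^esub> (psi s) \<otimes>\<^bsub>Q'\<^esub> psi r"
  using assms lam_Units[OF assms(1)] lam_closed[OF assms(2)]
  by (intro lift_eq) (simp_all add: fraction_eq_iff[symmetric] Q.Units_closed)

lemma kernel_lift_principal:
  assumes c: "c \<in> carrier Q" and c_comm: "\<And>a. a \<in> carrier A \<Longrightarrow> c \<otimes>\<^bsub>Q\<^esub> lam a = lam a \<otimes>\<^bsub>Q\<^esub> c"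
    and lift_c: "lift c = \<zero>\<^bsub>Q'\<^esub>"
    and psi_zero: "\<And>r. r \<in> carrier A \<Longrightarrow> psi r = \<zero>\<^bsub>Q'\<^esub> \<Longrightarrow>
                        \<exists>s\<in>S. \<exists>y\<in>carrier A. lam (s \<otimes>\<^bsub>A\<^esub> r) = c \<otimes>\<^bsub>Q\<^esub> lam y"
  shows "a_kernel Q Q' lift = {c \<otimes>\<^bsub>Q\<^esub> q | q. q \<in> carrier Q}"
proof (intro equalityI subsetI)
  fix x assume "x \<in> {c \<otimes>\<^bsub>Q\<^esub> q | q. q \<in> carrier Q}"
  then obtain q where q: "q \<in> carrier Q" and x: "x = c \<otimes>\<^bsub>Q\<^esub> q" by blast
  have "lift x = \<zero>\<^bsub>Q'\<^esub>" using c q lift_closed[OF q] by (simp add: x lift_mult lift_c)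
  then show "x \<in> a_kernel Q Q' lift" using c q by (simp add: a_kernel_def' x)
next
  fix x assume "x \<in> a_kernel Q Q' lift"
  then have x: "x \<in> carrier Q" and lift_x: "lift x = \<zero>\<^bsub>Q'\<^esub>" by (auto simp: a_kernel_def')
  obtain s r where s: "s \<in> S" and r: "r \<in> carrier A" and sx: "lam s \<otimes>\<^bsub>Q\<^esub> x = lam r"
    using fraction_exists[OF x] by blast
  have "psi r = psi s \<otimes>\<^bsub>Q'\<^esub> (inv\<^bsub>Q'\<^esub> (psi s) \<otimes>\<^bsub>Q'\<^esub> psi r)"
    using psi_Units[OF s] psi_closed[OF r] by (simp add: Q'.m_assoc[symmetric] Q'.Units_closed)
  also have "inv\<^bsub>Q'\<^esub> (psi s) \<otimes>\<^bsub>Q'\<^esub> psi r = \<zero>\<^bsub>Q'\<^esub>"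
    using lift_eq[OF s r x sx] lift_x by simp
  also have "psi s \<otimes>\<^bsub>Q'\<^esub> \<zero>\<^bsub>Q'\<^esub> = \<zero>\<^bsub>Q'\<^esub>"
    using psi_Units[OF s] by (simp add: Q'.Units_closed)
  finally obtain s' y where s': "s' \<in> S" and y: "y \<in> carrier A"
    and s'r: "lam (s' \<otimes>\<^bsub>A\<^esub> r) = c \<otimes>\<^bsub>Q\<^esub> lam y"
    using psi_zero[OF r] by blast
  define m where "m = s' \<otimes>\<^bsub>A\<^esub> s"
  have m: "m \<in> S" unfolding m_def using s' s by (rule S_mult)
  have mx: "lam m \<otimes>\<^bsub>Q\<^esub> x = c \<otimes>\<^bsub>Q\<^esub> lam y"
    using s' s r x S_carrier lam_closed by (simp add: m_def lam_mult Q.m_assoc sx flip: s'r)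
  have "x = inv\<^bsub>Q\<^esub> (lam m) \<otimes>\<^bsub>Q\<^esub> (lam m \<otimes>\<^bsub>Q\<^esub> x)"
    using lam_Units[OF m] x by (simp add: Q.m_assoc[symmetric] Q.Units_closed)
  also have "\<dots> = inv\<^bsub>Q\<^esub> (lam m) \<otimes>\<^bsub>Q\<^esub> c \<otimes>\<^bsub>Q\<^esub> lam y"
    using lam_Units[OF m] c lam_closed[OF y] by (simp add: mx Q.m_assoc Q.Units_closed)
  also have "\<dots> = c \<otimes>\<^bsub>Q\<^esub> (inv\<^bsub>Q\<^esub> (lam m) \<otimes>\<^bsub>Q\<^esub> lam y)"
    using Q.Units_inv_commute[OF lam_Units[OF m] c c_comm[OF S_carrier[OF m]]]
      lam_Units[OF m] c lam_closed[OF y] by (simp add: Q.m_assoc Q.Units_closed)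
  finally show "x \<in> {c \<otimes>\<^bsub>Q\<^esub> q | q. q \<in> carrier Q}"
    using lam_Units[OF m] lam_closed[OF y] by blast
qed

end

section \<open>Filtered rings and their Rees rings\<close>

locale filtered_ring = ring R for R (structure) +
  fixes w :: "'a \<Rightarrow> ereal"
  assumes filtration: "filtration R w"
begin

lemma w_integral: "r \<in> carrier R \<Longrightarrow> w r = \<infinity> \<or> (\<exists>m::int. w r = ereal (real_of_int m))"
  and w_zero: "w \<zero> = \<infinity>"
  and w_one: "0 \<le> w \<one>"
  and w_a_inv: "x \<in> carrier R \<Longrightarrow> w (\<ominus> x) = w x"
  and w_add: "x \<in> carrier R \<Longrightarrow> y \<in> carrier R \<Longrightarrow> min (w x) (w y) \<le> w (x \<oplus> y)"
  and w_mult: "x \<in> carrier R \<Longrightarrow> y \<in> carrier R \<Longrightarrow> w x + w y \<le> w (x \<otimes> y)"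
  using filtration by (auto simp: filtration_def)

lemma Fl_iff: "a \<in> Fl R w n \<longleftrightarrow> a \<in> carrier R \<and> ereal (real_of_int n) \<le> w a"
  by (simp add: Fl_def)

lemma Fl_carrier: "a \<in> Fl R w n \<Longrightarrow> a \<in> carrier R"
  by (simp add: Fl_iff)

lemma zero_Fl: "\<zero> \<in> Fl R w n"
  by (simp add: Fl_iff w_zero)

lemma one_Fl: "\<one> \<in> Fl R w 0"
  using w_one by (simp add: Fl_iff zero_ereal_def)

lemma Fl_add: "a \<in> Fl R w n \<Longrightarrow> b \<in> Fl R w n \<Longrightarrow> a \<oplus> b \<in> Fl R w n"
  unfolding Fl_iff using w_add by (auto intro: order_trans[OF _ w_add])

lemma Fl_a_inv: "a \<in> Fl R w n \<Longrightarrow> \<ominus> a \<in> Fl R w n"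
  by (simp add: Fl_iff w_a_inv)

lemma Fl_antimono:
  assumes "m \<le> n" and a: "a \<in> Fl R w n"
  shows "a \<in> Fl R w m"
proof -
  have "ereal (real_of_int m) \<le> ereal (real_of_int n)" using assms(1) by simp
  also have "\<dots> \<le> w a" using a by (simp add: Fl_iff)
  finally show ?thesis using a by (simp add: Fl_iff)
qed

lemma Fl_mult:
  assumes "a \<in> Fl R w m" and "b \<in> Fl R w n"
  shows "a \<otimes> b \<in> Fl R w (m + n)"
proof -
  have "ereal (real_of_int (m + n)) = ereal (real_of_int m) + ereal (real_of_int n)" by simp
  also have "\<dots> \<le> w a + w b" using assms by (intro add_mono) (simp_all add: Fl_iff)
  also have "\<dots> \<le> w (a \<otimes> b)" using assms by (intro w_mult) (simp_all add: Fl_iff)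
  finally show ?thesis using assms by (simp add: Fl_iff)
qed

lemma Fl_mult_diff:
  assumes a: "a \<in> Fl R w m" and b': "b' \<in> Fl R w n" and a': "a' \<in> carrier R" and b: "b \<in> carrier R"
    and aa': "a \<ominus> a' \<in> Fl R w (m + 1)" and bb': "b \<ominus> b' \<in> Fl R w (n + 1)"
  shows "a \<otimes> b \<ominus> a' \<otimes> b' \<in> Fl R w (m + n + 1)"
proof -
  have "a \<otimes> b \<ominus> a' \<otimes> b' = a \<otimes> (b \<ominus> b') \<oplus> (a \<ominus> a') \<otimes> b'"
    using Fl_carrier[OF a] Fl_carrier[OF b'] a' b by algebra
  moreover have "a \<otimes> (b \<ominus> b') \<in> Fl R w (m + n + 1)"
    using Fl_mult[OF a bb'] by (simp add: add.assoc)
  moreover have "(a \<ominus> a') \<otimes> b' \<in> Fl R w (m + n + 1)"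
    using Fl_mult[OF aa' b'] by (simp add: ac_simps)
  ultimately show ?thesis by (simp add: Fl_add)
qed

lemma Fl_finsum: "(\<And>i. i \<in> A \<Longrightarrow> f i \<in> Fl R w n) \<Longrightarrow> finsum R f A \<in> Fl R w n"
proof (induction A rule: infinite_finite_induct)
  case (insert x F)
  have "f \<in> F \<rightarrow> carrier R" "f x \<in> carrier R" using insert.prems by (auto intro: Fl_carrier)
  then show ?case using insert by (simp add: finsum_insert Fl_add)
qed (simp_all add: finsum_infinite zero_Fl)

lemma w_eq_of_Fl:
  assumes "a \<in> Fl R w d" and "a \<notin> Fl R w (d + 1)"
  shows "w a = ereal (real_of_int d)"
proof -
  have a: "a \<in> carrier R" and ge: "ereal (real_of_int d) \<le> w a"
    and nge: "\<not> ereal (real_of_int (d + 1)) \<le> w a"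
    using assms by (auto simp: Fl_iff)
  from w_integral[OF a] show ?thesis
  proof
    assume "\<exists>m::int. w a = ereal (real_of_int m)"
    then obtain m :: int where m: "w a = ereal (real_of_int m)" by blast
    then have "d \<le> m" and "\<not> d + 1 \<le> m" using ge nge by simp_all
    then show ?thesis using m by simp
  qed (use nge in simp)
qed

lemma Fl_abelian_subgroup: "abelian_subgroup (Fl R w n) R"
proof (rule abelian_subgroupI3[OF _ is_abelian_group])
  show "additive_subgroup (Fl R w n) R"
    unfolding additive_subgroup_def
    by (rule add.subgroupI) (auto intro: Fl_carrier zero_Fl Fl_a_inv Fl_add)
qed

lemma rcos_Fl_eq_iff:
  assumes a: "a \<in> carrier R" and b: "b \<in> carrier R"
  shows "Fl R w n +> a = Fl R w n +> b \<longleftrightarrow> a \<ominus> b \<in> Fl R w n"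
proof -
  interpret F: abelian_subgroup "Fl R w n" R by (rule Fl_abelian_subgroup)
  show ?thesis
  proof
    assume "Fl R w n +> a = Fl R w n +> b"
    then have "a \<in> Fl R w n +> b" using F.a_repr_independenceD a by blast
    then show "a \<ominus> b \<in> Fl R w n" using F.a_rcos_module_minus[OF ring_axioms b a] by simp
  next
    assume "a \<ominus> b \<in> Fl R w n"
    then have "a \<in> Fl R w n +> b" using F.a_rcos_module_minus[OF ring_axioms b a] by simp
    then show "Fl R w n +> a = Fl R w n +> b" using F.a_repr_independence' b by blast
  qed
qed

lemma rcos_Fl_eq_Fl_iff:
  assumes "a \<in> carrier R"
  shows "Fl R w n +> a = Fl R w n \<longleftrightarrow> a \<in> Fl R w n"
proof -
  interpret F: abelian_subgroup "Fl R w n" R by (rule Fl_abelian_subgroup)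
  show ?thesis
    using rcos_Fl_eq_iff[OF assms zero_closed, of n] F.a_rcos_const[OF zero_Fl] assms
    by (simp add: minus_eq)
qed

lemma rcos_Fl_self: "a \<in> Fl R w n \<Longrightarrow> Fl R w n +> a = Fl R w n"
  using rcos_Fl_eq_Fl_iff Fl_carrier by blast

abbreviation Rees where "Rees \<equiv> rees_ring R w"

lemma rees_carrier_iff: "f \<in> carrier Rees \<longleftrightarrow> (\<forall>n. f n \<in> Fl R w n) \<and> finite {n. f n \<noteq> \<zero>}"
  by (simp add: rees_ring_def)

lemma rees_mult: "f \<otimes>\<^bsub>Rees\<^esub> g = (\<lambda>k. \<Oplus>n\<in>{n. f n \<noteq> \<zero>}. f n \<otimes> g (k - n))"
  and rees_add: "f \<oplus>\<^bsub>Rees\<^esub> g = (\<lambda>n. f n \<oplus> g n)"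
  and rees_one: "\<one>\<^bsub>Rees\<^esub> = (\<lambda>n. if n = 0 then \<one> else \<zero>)"
  and rees_zero: "\<zero>\<^bsub>Rees\<^esub> = (\<lambda>n. \<zero>)"
  by (simp_all add: rees_ring_def)

lemma rees_Fl: "f \<in> carrier Rees \<Longrightarrow> f n \<in> Fl R w n"
  by (simp add: rees_carrier_iff)

lemma rees_closed: "f \<in> carrier Rees \<Longrightarrow> f n \<in> carrier R"
  using rees_Fl Fl_carrier by blast

lemma rees_finite_support: "f \<in> carrier Rees \<Longrightarrow> finite {n. f n \<noteq> \<zero>}"
  by (simp add: rees_carrier_iff)

lemma rees_carrierI: "(\<And>n. f n \<in> Fl R w n) \<Longrightarrow> finite {n. f n \<noteq> \<zero>} \<Longrightarrow> f \<in> carrier Rees"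
  by (simp add: rees_carrier_iff)

lemma rees_carrier_single:
  assumes "a \<in> Fl R w d"
  shows "(\<lambda>n. if n = d then a else \<zero>) \<in> carrier Rees"
proof (rule rees_carrierI)
  show "finite {n. (if n = d then a else \<zero>) \<noteq> \<zero>}"
    by (rule finite_subset[of _ "{d}"]) auto
qed (use assms zero_Fl in auto)

lemma rees_mult_eq_finsum:
  assumes f: "\<And>n. f n \<in> carrier R" and g: "g \<in> carrier Rees"
    and D: "finite D" "{n. f n \<noteq> \<zero>} \<subseteq> D"
  shows "(f \<otimes>\<^bsub>Rees\<^esub> g) k = (\<Oplus>n\<in>D. f n \<otimes> g (k - n))"
  unfolding rees_mult
  by (rule add.finprod_mono_neutral_cong_left) (use D f rees_closed[OF g] in auto)

lemma rees_mult_support: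
  assumes f: "f \<in> carrier Rees" and g: "g \<in> carrier Rees"
  shows "{k. (f \<otimes>\<^bsub>Rees\<^esub> g) k \<noteq> \<zero>} \<subseteq> (\<lambda>(a, b). a + b) ` ({n. f n \<noteq> \<zero>} \<times> {n. g n \<noteq> \<zero>})"
proof
  fix k assume k: "k \<in> {k. (f \<otimes>\<^bsub>Rees\<^esub> g) k \<noteq> \<zero>}"
  show "k \<in> (\<lambda>(a, b). a + b) ` ({n. f n \<noteq> \<zero>} \<times> {n. g n \<noteq> \<zero>})"
  proof (rule ccontr)
    assume nk: "k \<notin> (\<lambda>(a, b). a + b) ` ({n. f n \<noteq> \<zero>} \<times> {n. g n \<noteq> \<zero>})"
    have "g (k - n) = \<zero>" if "f n \<noteq> \<zero>" for n
    proof (rule ccontr)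
      assume "g (k - n) \<noteq> \<zero>"
      then have "(n, k - n) \<in> {n. f n \<noteq> \<zero>} \<times> {n. g n \<noteq> \<zero>}" using that by simp
      then show False using nk by (auto intro: rev_image_eqI[where x = "(n, k - n)"])
    qed
    then have "(f \<otimes>\<^bsub>Rees\<^esub> g) k = \<zero>"
      unfolding rees_mult using rees_closed[OF f] by (auto intro: add.finprod_one_eqI)
    then show False using k by simp
  qed
qed

lemma rees_mult_closed:
  assumes f: "f \<in> carrier Rees" and g: "g \<in> carrier Rees"
  shows "f \<otimes>\<^bsub>Rees\<^esub> g \<in> carrier Rees"
proof (rule rees_carrierI)
  fix k
  have "f n \<otimes> g (k - n) \<in> Fl R w k" for n
    using Fl_mult[OF rees_Fl[OF f] rees_Fl[OF g], of n "k - n"] by simp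
  then show "(f \<otimes>\<^bsub>Rees\<^esub> g) k \<in> Fl R w k"
    unfolding rees_mult by (intro Fl_finsum)
next
  show "finite {k. (f \<otimes>\<^bsub>Rees\<^esub> g) k \<noteq> \<zero>}"
    using rees_finite_support[OF f] rees_finite_support[OF g]
    by (intro finite_subset[OF rees_mult_support[OF f g]]) simp
qed

lemma rees_abelian_group: "abelian_group Rees"
proof (rule abelian_groupI)
  fix f g assume f: "f \<in> carrier Rees" and g: "g \<in> carrier Rees"
  show "f \<oplus>\<^bsub>Rees\<^esub> g \<in> carrier Rees"
  proof (rule rees_carrierI)
    show "\<And>n. (f \<oplus>\<^bsub>Rees\<^esub> g) n \<in> Fl R w n" using f g by (simp add: rees_add Fl_add rees_Fl)
    have "{n. (f \<oplus>\<^bsub>Rees\<^esub> g) n \<noteq> \<zero>} \<subseteq> {n. f n \<noteq> \<zero>} \<union> {n. g n \<noteq> \<zero>}" by (auto simp: rees_add)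
    then show "finite {n. (f \<oplus>\<^bsub>Rees\<^esub> g) n \<noteq> \<zero>}"
      using rees_finite_support[OF f] rees_finite_support[OF g] by (auto dest: finite_subset)
  qed
  show "f \<oplus>\<^bsub>Rees\<^esub> g = g \<oplus>\<^bsub>Rees\<^esub> f"
    using rees_closed[OF f] rees_closed[OF g] by (simp add: rees_add a_comm)
next
  show "\<zero>\<^bsub>Rees\<^esub> \<in> carrier Rees" by (rule rees_carrierI) (simp_all add: rees_zero zero_Fl)
next
  fix f g h assume "f \<in> carrier Rees" "g \<in> carrier Rees" "h \<in> carrier Rees"
  then show "f \<oplus>\<^bsub>Rees\<^esub> g \<oplus>\<^bsub>Rees\<^esub> h = f \<oplus>\<^bsub>Rees\<^esub> (g \<oplus>\<^bsub>Rees\<^esub> h)"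
    by (simp add: rees_add a_assoc rees_closed)
next
  fix f assume f: "f \<in> carrier Rees"
  then show "\<zero>\<^bsub>Rees\<^esub> \<oplus>\<^bsub>Rees\<^esub> f = f" by (simp add: rees_add rees_zero rees_closed)
  have "(\<lambda>n. \<ominus> f n) \<in> carrier Rees"
    using f by (intro rees_carrierI) (simp_all add: Fl_a_inv rees_Fl rees_finite_support rees_closed)
  moreover have "(\<lambda>n. \<ominus> f n) \<oplus>\<^bsub>Rees\<^esub> f = \<zero>\<^bsub>Rees\<^esub>"
    using f by (simp add: rees_add rees_zero rees_closed l_neg)
  ultimately show "\<exists>g\<in>carrier Rees. g \<oplus>\<^bsub>Rees\<^esub> f = \<zero>\<^bsub>Rees\<^esub>" by blast
qed

lemma rho1_eq_finsum:
  assumes f: "\<And>n. f n \<in> carrier R" and D: "finite D" "{n. f n \<noteq> \<zero>} \<subseteq> D"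
  shows "rho1 R f = finsum R f D"
  unfolding rho1_def by (rule add.finprod_mono_neutral_cong_left) (use D f in auto)

lemma rho1_closed: "f \<in> carrier Rees \<Longrightarrow> rho1 R f \<in> carrier R"
  unfolding rho1_def using rees_closed by (auto intro!: finsum_closed)

lemma rho1_add:
  assumes f: "f \<in> carrier Rees" and g: "g \<in> carrier Rees"
  shows "rho1 R (f \<oplus>\<^bsub>Rees\<^esub> g) = rho1 R f \<oplus> rho1 R g"
proof -
  define D where "D = {n. f n \<noteq> \<zero>} \<union> {n. g n \<noteq> \<zero>}"
  have D: "finite D" using rees_finite_support f g by (simp add: D_def)
  have "rho1 R (f \<oplus>\<^bsub>Rees\<^esub> g) = (\<Oplus>n\<in>D. f n \<oplus> g n)"
    unfolding rees_add using D rees_closed[OF f] rees_closed[OF g]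
    by (intro rho1_eq_finsum) (auto simp: D_def)
  also have "\<dots> = finsum R f D \<oplus> finsum R g D"
    using rees_closed[OF f] rees_closed[OF g] by (intro finsum_addf) auto
  also have "\<dots> = rho1 R f \<oplus> rho1 R g"
    using D rees_closed[OF f] rees_closed[OF g]
    by (simp add: rho1_eq_finsum[of f D] rho1_eq_finsum[of g D] D_def)
  finally show ?thesis .
qed

lemma rho1_mult:
  assumes f: "f \<in> carrier Rees" and g: "g \<in> carrier Rees"
  shows "rho1 R (f \<otimes>\<^bsub>Rees\<^esub> g) = rho1 R f \<otimes> rho1 R g"
proof -
  define P where "P = {n. f n \<noteq> \<zero>}"
  define D where "D = (\<lambda>(a, b). a + b) ` (P \<times> {n. g n \<noteq> \<zero>})"
  have P: "finite P" and D: "finite D"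
    using rees_finite_support[OF f] rees_finite_support[OF g] by (simp_all add: P_def D_def)
  have fg: "\<And>n m. f n \<otimes> g m \<in> carrier R" using rees_closed f g by simp
  have g_shift: "(\<Oplus>k\<in>D. g (k - n)) = rho1 R g" if n: "n \<in> P" for n
  proof -
    have "(\<Oplus>k\<in>D. g (k - n)) = (\<Oplus>m\<in>(\<lambda>k. k - n) ` D. g m)"
      using finsum_reindex[of g "\<lambda>k. k - n" D] rees_closed[OF g] by (simp add: comp_def inj_on_def)
    also have "\<dots> = rho1 R g"
    proof (rule rho1_eq_finsum[symmetric])
      show "{m. g m \<noteq> \<zero>} \<subseteq> (\<lambda>k. k - n) ` D"
      proof
        fix m assume "m \<in> {m. g m \<noteq> \<zero>}"
        then have "n + m \<in> D" using n unfolding D_def by (auto intro: rev_image_eqI[where x = "(n, m)"])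
        then show "m \<in> (\<lambda>k. k - n) ` D" by (rule rev_image_eqI) simp
      qed
    qed (use rees_closed[OF g] D in simp_all)
    finally show ?thesis .
  qed
  have "rho1 R (f \<otimes>\<^bsub>Rees\<^esub> g) = (\<Oplus>k\<in>D. \<Oplus>n\<in>P. f n \<otimes> g (k - n))"
    using D rees_closed[OF rees_mult_closed[OF f g]] rees_mult_support[OF f g]
    by (subst rho1_eq_finsum[of _ D]) (auto simp: D_def P_def rees_mult)
  also have "\<dots> = (\<Oplus>n\<in>P. \<Oplus>k\<in>D. f n \<otimes> g (k - n))"
    using P D fg by (intro finsum_swap) auto
  also have "\<dots> = (\<Oplus>n\<in>P. f n \<otimes> rho1 R g)"
  proof (rule finsum_cong')
    fix n assume "n \<in> P"
    then show "(\<Oplus>k\<in>D. f n \<otimes> g (k - n)) = f n \<otimes> rho1 R g"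
      using finsum_rdistr[OF D rees_closed[OF f], of "\<lambda>k. g (k - n)" n] rees_closed[OF g]
      by (simp add: g_shift)
  qed (use rees_closed[OF f] rho1_closed[OF g] in auto)
  also have "\<dots> = rho1 R f \<otimes> rho1 R g"
    using finsum_ldistr[OF P rho1_closed[OF g], of f] rees_closed[OF f] by (simp add: rho1_def P_def)
  finally show ?thesis .
qed

lemma rho1_ring_hom: "rho1 R \<in> ring_hom Rees R"
proof (rule ring_hom_memI)
  have "rho1 R \<one>\<^bsub>Rees\<^esub> = finsum R (\<one>\<^bsub>Rees\<^esub>) {0}"
    by (rule rho1_eq_finsum) (auto simp: rees_one)
  then show "rho1 R \<one>\<^bsub>Rees\<^esub> = \<one>" by (simp add: rees_one finsum_insert)
qed (simp_all add: rho1_closed rho1_add rho1_mult)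


lemma rees_t_carrier: "rees_t R \<in> carrier Rees"
  unfolding rees_t_def using rees_carrier_single[OF Fl_antimono[OF _ one_Fl], of "-1"]
  by (simp cong: if_cong)

lemma rees_t_mult:
  assumes y: "y \<in> carrier Rees"
  shows "rees_t R \<otimes>\<^bsub>Rees\<^esub> y = (\<lambda>k. y (k + 1))"
proof
  fix k
  have "(rees_t R \<otimes>\<^bsub>Rees\<^esub> y) k = (\<Oplus>n\<in>{-1}. rees_t R n \<otimes> y (k - n))"
    using rees_closed[OF rees_t_carrier] y by (intro rees_mult_eq_finsum) (auto simp: rees_t_def)
  then show "(rees_t R \<otimes>\<^bsub>Rees\<^esub> y) k = y (k + 1)"
    using rees_closed[OF y] by (simp add: rees_t_def)
qed

lemma mult_rees_t:
  assumes s: "s \<in> carrier Rees"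
  shows "s \<otimes>\<^bsub>Rees\<^esub> rees_t R = (\<lambda>k. s (k + 1))"
proof
  fix k
  define D where "D = insert (k + 1) {n. s n \<noteq> \<zero>}"
  have D: "finite D" "k + 1 \<in> D" using rees_finite_support[OF s] by (simp_all add: D_def)
  have "(s \<otimes>\<^bsub>Rees\<^esub> rees_t R) k = (\<Oplus>n\<in>D. s n \<otimes> rees_t R (k - n))"
    using rees_closed[OF s] rees_t_carrier D by (intro rees_mult_eq_finsum) (auto simp: D_def)
  also have "\<dots> = (\<Oplus>n\<in>D. if k + 1 = n then s n else \<zero>)"
    using rees_closed[OF s] by (intro finsum_cong') (auto simp: rees_t_def)
  also have "\<dots> = s (k + 1)"
    using D rees_closed[OF s] by (intro add.finprod_singleton) auto
  finally show "(s \<otimes>\<^bsub>Rees\<^esub> rees_t R) k = s (k + 1)" .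
qed

lemma rees_t_commute: "s \<in> carrier Rees \<Longrightarrow> rees_t R \<otimes>\<^bsub>Rees\<^esub> s = s \<otimes>\<^bsub>Rees\<^esub> rees_t R"
  by (simp add: rees_t_mult mult_rees_t)

lemma rho1_rees_t: "rho1 R (rees_t R) = \<one>"
proof -
  have "rho1 R (rees_t R) = finsum R (rees_t R) {-1}"
    by (rule rho1_eq_finsum) (auto simp: rees_t_def)
  then show ?thesis by (simp add: rees_t_def)
qed

lemma rees_homog_mult:
  assumes x: "rees_homog R w x d" and y: "rees_homog R w y e"
  shows "rees_homog R w (x \<otimes>\<^bsub>Rees\<^esub> y) (d + e)"
proof -
  have xc: "x \<in> carrier Rees" and x0: "\<And>n. n \<noteq> d \<Longrightarrow> x n = \<zero>"
    using x unfolding rees_homog_def by blast+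
  have yc: "y \<in> carrier Rees" and y0: "\<And>n. n \<noteq> e \<Longrightarrow> y n = \<zero>"
    using y unfolding rees_homog_def by blast+
  have "{n. x n \<noteq> \<zero>} \<subseteq> {d}" using x0 by blast
  then have "(x \<otimes>\<^bsub>Rees\<^esub> y) k = x d \<otimes> y (k - d)" for k
    using rees_mult_eq_finsum[of x y "{d}" k] rees_closed[OF xc] rees_closed[OF yc] yc by simp
  then show ?thesis
    unfolding rees_homog_def using rees_mult_closed[OF xc yc] y0 rees_closed[OF xc] by simp
qed

lemma rho1_rees_homog:
  assumes "rees_homog R w s d"
  shows "rho1 R s = s d"
proof -
  have s: "s \<in> carrier Rees" and s0: "\<And>n. n \<noteq> d \<Longrightarrow> s n = \<zero>"
    using assms by (auto simp: rees_homog_def)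
  have "rho1 R s = finsum R s {d}"
    using rees_closed[OF s] s0 by (intro rho1_eq_finsum) auto
  then show ?thesis using rees_closed[OF s] by simp
qed

definition tail_sum :: "(int \<Rightarrow> 'a) \<Rightarrow> int \<Rightarrow> 'a" where
  "tail_sum f k = (\<Oplus>n\<in>{n. f n \<noteq> \<zero> \<and> k \<le> n}. f n)"

lemma tail_sum_Fl:
  assumes f: "f \<in> carrier Rees"
  shows "tail_sum f k \<in> Fl R w k"
  unfolding tail_sum_def using Fl_antimono rees_Fl[OF f] by (auto intro!: Fl_finsum)

lemma tail_sum_step:
  assumes f: "f \<in> carrier Rees"
  shows "tail_sum f k = f k \<oplus> tail_sum f (k + 1)"
proof (cases "f k = \<zero>")
  case True
  then have "{n. f n \<noteq> \<zero> \<and> k \<le> n} = {n. f n \<noteq> \<zero> \<and> k + 1 \<le> n}"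
    by (auto simp: order_le_less)
  then show ?thesis
    using True Fl_carrier[OF tail_sum_Fl[OF f]] by (simp add: tail_sum_def)
next
  case False
  define A where "A = {n. f n \<noteq> \<zero> \<and> k + 1 \<le> n}"
  have "{n. f n \<noteq> \<zero> \<and> k \<le> n} = insert k A" and "k \<notin> A" and "finite A"
    using False rees_finite_support[OF f] by (auto simp: A_def)
  then show ?thesis
    using rees_closed[OF f] by (simp add: tail_sum_def A_def[symmetric] finsum_insert)
qed

lemma tail_sum_finite_support:
  assumes f: "f \<in> carrier Rees" and f0: "rho1 R f = \<zero>"
  shows "finite {k. tail_sum f k \<noteq> \<zero>}"
proof (rule finite_subset)
  define P where "P = {n. f n \<noteq> \<zero>}"
  have P: "finite P" unfolding P_def using rees_finite_support[OF f] .
  define a where "a = Min (insert 0 P)"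
  define b where "b = Max (insert 0 P)"
  have ab: "a \<le> n" "n \<le> b" if "f n \<noteq> \<zero>" for n
    using P that by (auto simp: a_def b_def P_def)
  show "{k. tail_sum f k \<noteq> \<zero>} \<subseteq> {a<..b}"
  proof
    fix k assume k: "k \<in> {k. tail_sum f k \<noteq> \<zero>}"
    have "a < k"
    proof (rule ccontr)
      assume "\<not> a < k"
      then have all: "{n. f n \<noteq> \<zero> \<and> k \<le> n} = {n. f n \<noteq> \<zero>}" using ab by force
      have "tail_sum f k = \<zero>" using f0 unfolding tail_sum_def all by (simp add: rho1_def)
      then show False using k by simp
    qed
    moreover have "k \<le> b"
    proof (rule ccontr)
      assume "\<not> k \<le> b"
      then have empty: "{n. f n \<noteq> \<zero> \<and> k \<le> n} = {}" using ab by force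
      have "tail_sum f k = \<zero>" unfolding tail_sum_def empty by simp
      then show False using k by simp
    qed
    ultimately show "k \<in> {a<..b}" by simp
  qed
qed simp

lemma rho1_zero_imp_t_minus_one_multiple:
  assumes r: "r \<in> carrier Rees" and r0: "rho1 R r = \<zero>"
  shows "\<exists>y\<in>carrier Rees. r \<oplus>\<^bsub>Rees\<^esub> y = rees_t R \<otimes>\<^bsub>Rees\<^esub> y"
proof -
  define y where "y k = \<ominus> tail_sum r k" for k
  have "{k. y k \<noteq> \<zero>} \<subseteq> {k. tail_sum r k \<noteq> \<zero>}" by (auto simp: y_def)
  then have yc: "y \<in> carrier Rees"
    using tail_sum_Fl[OF r] tail_sum_finite_support[OF r r0]
    by (intro rees_carrierI) (simp_all add: y_def Fl_a_inv finite_subset)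
  have "r k \<oplus> y k = y (k + 1)" for k
    using rees_closed[OF r] Fl_carrier[OF tail_sum_Fl[OF r]]
    by (simp add: y_def tail_sum_step[OF r, of k] minus_add a_assoc[symmetric] r_neg)
  then have "r \<oplus>\<^bsub>Rees\<^esub> y = rees_t R \<otimes>\<^bsub>Rees\<^esub> y"
    by (simp add: rees_t_mult[OF yc] rees_add)
  then show ?thesis using yc by blast
qed


section \<open>The associated graded ring\<close>

abbreviation Gr where "Gr \<equiv> gr_ring R w"

lemma gr_carrier_iff: "g \<in> carrier Gr \<longleftrightarrow>
    (\<forall>n. \<exists>a\<in>Fl R w n. g n = Fl R w (n + 1) +> a) \<and> finite {n. g n \<noteq> Fl R w (n + 1)}"
  by (simp add: gr_ring_def)

lemma gr_mult: "g \<otimes>\<^bsub>Gr\<^esub> h = (\<lambda>k. Fl R w (k + 1) +>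
    (\<Oplus>n\<in>{n. g n \<noteq> Fl R w (n + 1)}. gr_rep R w g n \<otimes> gr_rep R w h (k - n)))"
  and gr_add: "g \<oplus>\<^bsub>Gr\<^esub> h = (\<lambda>n. Fl R w (n + 1) +> (gr_rep R w g n \<oplus> gr_rep R w h n))"
  and gr_one: "\<one>\<^bsub>Gr\<^esub> = (\<lambda>n. Fl R w (n + 1) +> (if n = 0 then \<one> else \<zero>))"
  and gr_zero: "\<zero>\<^bsub>Gr\<^esub> = (\<lambda>n. Fl R w (n + 1))"
  by (simp_all add: gr_ring_def)

lemma gr_rep:
  assumes "g \<in> carrier Gr"
  shows "gr_rep R w g n \<in> Fl R w n" and "g n = Fl R w (n + 1) +> gr_rep R w g n"
proof -
  have "\<exists>a. a \<in> Fl R w n \<and> g n = Fl R w (n + 1) +> a" using assms by (auto simp: gr_carrier_iff)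
  then have "gr_rep R w g n \<in> Fl R w n \<and> g n = Fl R w (n + 1) +> gr_rep R w g n"
    unfolding gr_rep_def by (rule someI_ex)
  then show "gr_rep R w g n \<in> Fl R w n" and "g n = Fl R w (n + 1) +> gr_rep R w g n" by auto
qed

lemma rho2_apply: "rho2 R w f n = Fl R w (n + 1) +> f n"
  by (simp add: rho2_def)

lemma rho2_closed:
  assumes f: "f \<in> carrier Rees"
  shows "rho2 R w f \<in> carrier Gr"
proof -
  have "{n. rho2 R w f n \<noteq> Fl R w (n + 1)} \<subseteq> {n. f n \<noteq> \<zero>}"
    using rcos_Fl_self[OF zero_Fl] by (auto simp: rho2_apply)
  then show ?thesis
    using rees_Fl[OF f] rees_finite_support[OF f]
    by (auto simp: gr_carrier_iff rho2_apply intro: finite_subset)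
qed

lemma rho2_eq_zero_iff:
  assumes f: "f \<in> carrier Rees"
  shows "rho2 R w f = \<zero>\<^bsub>Gr\<^esub> \<longleftrightarrow> (\<forall>n. f n \<in> Fl R w (n + 1))"
  using rcos_Fl_eq_Fl_iff[OF rees_closed[OF f]] by (simp add: gr_zero rho2_apply fun_eq_iff)

lemma minus_gr_rep_rho2:
  assumes f: "f \<in> carrier Rees"
  shows "f n \<ominus> gr_rep R w (rho2 R w f) n \<in> Fl R w (n + 1)"
  using gr_rep[OF rho2_closed[OF f], of n] rees_closed[OF f]
  by (simp add: rho2_apply rcos_Fl_eq_iff Fl_carrier)

lemma rho2_add:
  assumes f: "f \<in> carrier Rees" and g: "g \<in> carrier Rees"
  shows "rho2 R w (f \<oplus>\<^bsub>Rees\<^esub> g) = rho2 R w f \<oplus>\<^bsub>Gr\<^esub> rho2 R w g"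
proof
  fix n
  let ?a = "gr_rep R w (rho2 R w f) n" and ?b = "gr_rep R w (rho2 R w g) n"
  have ab: "?a \<in> carrier R" "?b \<in> carrier R"
    using gr_rep(1)[OF rho2_closed[OF f]] gr_rep(1)[OF rho2_closed[OF g]] Fl_carrier by auto
  have "(f n \<oplus> g n) \<ominus> (?a \<oplus> ?b) = (f n \<ominus> ?a) \<oplus> (g n \<ominus> ?b)"
    using ab rees_closed[OF f] rees_closed[OF g] by algebra
  also have "\<dots> \<in> Fl R w (n + 1)"
    using minus_gr_rep_rho2[OF f] minus_gr_rep_rho2[OF g] by (rule Fl_add)
  finally show "rho2 R w (f \<oplus>\<^bsub>Rees\<^esub> g) n = (rho2 R w f \<oplus>\<^bsub>Gr\<^esub> rho2 R w g) n"
    using ab rees_closed[OF f] rees_closed[OF g] by (simp add: rho2_apply rees_add gr_add rcos_Fl_eq_iff)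
qed

lemma rho2_mult:
  assumes f: "f \<in> carrier Rees" and g: "g \<in> carrier Rees"
  shows "rho2 R w (f \<otimes>\<^bsub>Rees\<^esub> g) = rho2 R w f \<otimes>\<^bsub>Gr\<^esub> rho2 R w g"
proof
  fix k
  define P where "P = {n. f n \<noteq> \<zero>}"
  define Sg where "Sg = {n. rho2 R w f n \<noteq> Fl R w (n + 1)}"
  define a where "a n = gr_rep R w (rho2 R w f) n" for n
  define b where "b n = gr_rep R w (rho2 R w g) n" for n
  define x where "x n = (if n \<in> Sg then a n \<otimes> b (k - n) else \<zero>)" for n
  have aF: "a n \<in> Fl R w n" and bF: "b n \<in> Fl R w n" for n
    unfolding a_def b_def using gr_rep(1) rho2_closed f g by blast+
  have fg: "f n \<otimes> g m \<in> carrier R" and x: "x n \<in> carrier R" for n m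
    using rees_closed[OF f] rees_closed[OF g] Fl_carrier[OF aF] Fl_carrier[OF bF]
    by (simp_all add: x_def)
  have P: "finite P" unfolding P_def using rees_finite_support[OF f] .
  have "Sg \<subseteq> P" using rcos_Fl_self[OF zero_Fl] by (auto simp: Sg_def P_def rho2_apply)
  then have rep_sum: "(\<Oplus>n\<in>Sg. a n \<otimes> b (k - n)) = finsum R x P"
    using P x by (intro add.finprod_mono_neutral_cong_left) (auto simp: x_def)
  have summand: "f n \<otimes> g (k - n) \<ominus> x n \<in> Fl R w (k + 1)" for n
  proof (cases "n \<in> Sg")
    case True
    have "f n \<otimes> g (k - n) \<ominus> a n \<otimes> b (k - n) \<in> Fl R w (n + (k - n) + 1)"
      using minus_gr_rep_rho2[OF f, of n] minus_gr_rep_rho2[OF g, of "k - n"] aF bF Fl_carrier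
      by (intro Fl_mult_diff[OF rees_Fl[OF f]]) (auto simp: a_def b_def rees_closed[OF g])
    then show ?thesis using True by (simp add: x_def)
  next
    case False
    then have "f n \<in> Fl R w (n + 1)"
      using rcos_Fl_eq_Fl_iff[OF rees_closed[OF f]] by (simp add: Sg_def rho2_apply)
    then have "f n \<otimes> g (k - n) \<in> Fl R w (n + 1 + (k - n))" by (rule Fl_mult[OF _ rees_Fl[OF g]])
    then show ?thesis using False fg by (simp add: x_def minus_eq algebra_simps)
  qed
  have "(f \<otimes>\<^bsub>Rees\<^esub> g) k \<ominus> finsum R x P = (\<Oplus>n\<in>P. f n \<otimes> g (k - n) \<ominus> x n)"
    unfolding rees_mult P_def[symmetric] using P fg x by (intro finsum_diff) auto
  also have "\<dots> \<in> Fl R w (k + 1)" using summand by (rule Fl_finsum)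
  finally have "Fl R w (k + 1) +> (f \<otimes>\<^bsub>Rees\<^esub> g) k = Fl R w (k + 1) +> (\<Oplus>n\<in>Sg. a n \<otimes> b (k - n))"
    using rees_closed[OF rees_mult_closed[OF f g]] x
    by (subst rcos_Fl_eq_iff) (auto simp: rep_sum intro: finsum_closed)
  then show "rho2 R w (f \<otimes>\<^bsub>Rees\<^esub> g) k = (rho2 R w f \<otimes>\<^bsub>Gr\<^esub> rho2 R w g) k"
    by (simp only: rho2_apply gr_mult a_def b_def Sg_def)
qed

lemma rho2_ring_hom: "rho2 R w \<in> ring_hom Rees Gr"
proof (rule ring_hom_memI)
  show "rho2 R w \<one>\<^bsub>Rees\<^esub> = \<one>\<^bsub>Gr\<^esub>" by (simp add: rho2_def rees_one gr_one)
qed (simp_all add: rho2_closed rho2_add rho2_mult)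

lemma rho2_rees_t: "rho2 R w (rees_t R) = \<zero>\<^bsub>Gr\<^esub>"
  by (subst rho2_eq_zero_iff[OF rees_t_carrier]) (simp add: rees_t_def one_Fl zero_Fl)

lemma gr_homog_rho2:
  assumes "rees_homog R w f d"
  shows "gr_homog R w (rho2 R w f) d"
  using assms rho2_closed rcos_Fl_self[OF zero_Fl]
  unfolding rees_homog_def gr_homog_def by (auto simp: rho2_apply)

lemma gr_homog_lift:
  assumes g: "gr_homog R w g d"
  shows "\<exists>s. rees_homog R w s d \<and> rho2 R w s = g"
proof -
  have gc: "g \<in> carrier Gr" and g0: "\<And>n. n \<noteq> d \<Longrightarrow> g n = Fl R w (n + 1)"
    using g unfolding gr_homog_def by blast+
  define s where "s n = (if n = d then gr_rep R w g d else \<zero>)" for n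
  have "s \<in> carrier Rees"
    unfolding s_def using gr_rep(1)[OF gc] by (rule rees_carrier_single)
  then have "rees_homog R w s d" by (simp add: rees_homog_def s_def)
  moreover have "rho2 R w s n = g n" for n
    using gr_rep(2)[OF gc, of d] g0[of n] rcos_Fl_self[OF zero_Fl] by (simp add: rho2_apply s_def)
  ultimately show ?thesis by blast
qed

lemma rho2_zero_imp_t_multiple:
  assumes z: "z \<in> carrier Rees" and z0: "rho2 R w z = \<zero>\<^bsub>Gr\<^esub>"
  shows "\<exists>y\<in>carrier Rees. rees_t R \<otimes>\<^bsub>Rees\<^esub> y = z"
proof -
  define y where "y m = z (m - 1)" for m
  have "y m \<in> Fl R w m" for m
    using z0 rho2_eq_zero_iff[OF z] unfolding y_def by (metis diff_add_cancel)
  moreover have "{m. y m \<noteq> \<zero>} \<subseteq> (\<lambda>n. n + 1) ` {n. z n \<noteq> \<zero>}"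
  proof
    fix m assume "m \<in> {m. y m \<noteq> \<zero>}"
    then have "m - 1 \<in> {n. z n \<noteq> \<zero>}" by (simp add: y_def)
    then show "m \<in> (\<lambda>n. n + 1) ` {n. z n \<noteq> \<zero>}" by (rule rev_image_eqI) simp
  qed
  then have "finite {m. y m \<noteq> \<zero>}"
    using rees_finite_support[OF z] by (blast intro: finite_subset finite_imageI)
  ultimately have yc: "y \<in> carrier Rees" by (rule rees_carrierI)
  have "rees_t R \<otimes>\<^bsub>Rees\<^esub> y = z" by (simp add: rees_t_mult[OF yc] y_def)
  then show ?thesis using yc by blast
qed


section \<open>Extending rho1 and rho2 to rings of fractions\<close>

lemma mult_closed_St_set:
  assumes T: "mult_closed Gr T"
  shows "mult_closed Rees (St_set R w T)"
  unfolding mult_closed_def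
proof (intro conjI ballI)
  show "St_set R w T \<subseteq> carrier Rees" by (auto simp: St_set_def)
  have "rees_homog R w \<one>\<^bsub>Rees\<^esub> 0"
    using rees_carrier_single[OF one_Fl] by (simp add: rees_homog_def rees_one)
  moreover have "rho2 R w \<one>\<^bsub>Rees\<^esub> \<in> T"
    using ring_hom_one[OF rho2_ring_hom] T by (simp add: mult_closed_def)
  ultimately show "\<one>\<^bsub>Rees\<^esub> \<in> St_set R w T" by (auto simp: St_set_def rees_homog_def)
next
  fix x y assume x: "x \<in> St_set R w T" and y: "y \<in> St_set R w T"
  then obtain d e where "rees_homog R w x d" "rees_homog R w y e" by (auto simp: St_set_def)
  then have "rees_homog R w (x \<otimes>\<^bsub>Rees\<^esub> y) (d + e)" by (rule rees_homog_mult)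
  moreover have "rho2 R w (x \<otimes>\<^bsub>Rees\<^esub> y) \<in> T"
    using x y T rho2_mult by (simp add: St_set_def mult_closed_def)
  ultimately show "x \<otimes>\<^bsub>Rees\<^esub> y \<in> St_set R w T" by (auto simp: St_set_def rees_homog_def)
qed

lemma rho1_St_set:
  assumes s: "s \<in> St_set R w T" and T0: "\<zero>\<^bsub>Gr\<^esub> \<notin> T"
  shows "rho1 R s \<in> S_set R w T"
proof -
  obtain d where sd: "rees_homog R w s d" and sT: "rho2 R w s \<in> T"
    using s by (auto simp: St_set_def)
  have sc: "s \<in> carrier Rees" and s0: "\<And>n. n \<noteq> d \<Longrightarrow> s n = \<zero>"
    using sd unfolding rees_homog_def by blast+
  have "s d \<notin> Fl R w (d + 1)"
  proof
    assume "s d \<in> Fl R w (d + 1)"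
    then have "\<forall>n. s n \<in> Fl R w (n + 1)" using s0 zero_Fl by metis
    then show False using sT T0 rho2_eq_zero_iff[OF sc] by simp
  qed
  then have wd: "w (s d) = ereal (real_of_int d)" and "s d \<noteq> \<zero>"
    using w_eq_of_Fl[OF rees_Fl[OF sc]] zero_Fl by auto
  moreover have "gr_elt R w (s d) = rho2 R w s"
  proof
    fix n show "gr_elt R w (s d) n = rho2 R w s n"
      using s0[of n] rcos_Fl_self[OF zero_Fl] by (auto simp: gr_elt_def rho2_apply wd)
  qed
  ultimately show ?thesis
    using rees_closed[OF sc] sT by (simp add: S_set_def rho1_rees_homog[OF sd])
qed

lemma rees_left_fractions:
  assumes "mult_closed Gr T" and "left_ring_of_fractions Rees (St_set R w T) Q lam"
  shows "left_fractions Rees Q (St_set R w T) lam"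
  using assms rees_abelian_group rees_mult_closed mult_closed_St_set
  by (intro left_fractions.intro left_fractions_axioms.intro) (auto simp: left_ring_of_fractions_def)


lemma lam_rees_t_commute:
  assumes "left_fractions Rees Q S lam" and a: "a \<in> carrier Rees"
  shows "lam (rees_t R) \<otimes>\<^bsub>Q\<^esub> lam a = lam a \<otimes>\<^bsub>Q\<^esub> lam (rees_t R)"
proof -
  interpret L: left_fractions Rees Q S lam by (rule assms(1))
  show ?thesis
    using rees_t_commute[OF a] by (simp flip: L.lam_mult[OF rees_t_carrier a] L.lam_mult[OF a rees_t_carrier])
qed

lemma lam_rees_t_minus_one_commute:
  assumes "left_fractions Rees Q S lam" and a: "a \<in> carrier Rees"
  shows "(lam (rees_t R) \<ominus>\<^bsub>Q\<^esub> \<one>\<^bsub>Q\<^esub>) \<otimes>\<^bsub>Q\<^esub> lam a = lam a \<otimes>\<^bsub>Q\<^esub> (lam (rees_t R) \<ominus>\<^bsub>Q\<^esub> \<one>\<^bsub>Q\<^esub>)"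
proof -
  interpret L: left_fractions Rees Q S lam by (rule assms(1))
  have t: "lam (rees_t R) \<in> carrier Q" by (rule L.lam_closed[OF rees_t_carrier])
  have "(lam (rees_t R) \<ominus>\<^bsub>Q\<^esub> \<one>\<^bsub>Q\<^esub>) \<otimes>\<^bsub>Q\<^esub> lam a = lam (rees_t R) \<otimes>\<^bsub>Q\<^esub> lam a \<ominus>\<^bsub>Q\<^esub> lam a"
    using t L.lam_closed[OF a] by algebra
  also have "\<dots> = lam a \<otimes>\<^bsub>Q\<^esub> lam (rees_t R) \<ominus>\<^bsub>Q\<^esub> lam a"
    by (simp add: lam_rees_t_commute[OF assms])
  also have "\<dots> = lam a \<otimes>\<^bsub>Q\<^esub> (lam (rees_t R) \<ominus>\<^bsub>Q\<^esub> \<one>\<^bsub>Q\<^esub>)"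
    using t L.lam_closed[OF a] by (simp add: L.Q.minus_eq L.Q.r_distr L.Q.r_minus)
  finally show ?thesis .
qed

lemma lam_rho1_zero:
  assumes "left_fractions Rees Q S lam" and r: "r \<in> carrier Rees" and r0: "rho1 R r = \<zero>"
  shows "\<exists>y\<in>carrier Rees. lam r = (lam (rees_t R) \<ominus>\<^bsub>Q\<^esub> \<one>\<^bsub>Q\<^esub>) \<otimes>\<^bsub>Q\<^esub> lam y"
proof -
  interpret L: left_fractions Rees Q S lam by (rule assms(1))
  obtain y where y: "y \<in> carrier Rees" and ry: "r \<oplus>\<^bsub>Rees\<^esub> y = rees_t R \<otimes>\<^bsub>Rees\<^esub> y"
    using rho1_zero_imp_t_minus_one_multiple[OF r r0] by blast
  have t: "lam (rees_t R) \<in> carrier Q" by (rule L.lam_closed[OF rees_t_carrier])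
  have "(lam (rees_t R) \<ominus>\<^bsub>Q\<^esub> \<one>\<^bsub>Q\<^esub>) \<otimes>\<^bsub>Q\<^esub> lam y = lam (rees_t R) \<otimes>\<^bsub>Q\<^esub> lam y \<ominus>\<^bsub>Q\<^esub> lam y"
    using t L.lam_closed[OF y] by algebra
  also have "\<dots> = (lam r \<oplus>\<^bsub>Q\<^esub> lam y) \<ominus>\<^bsub>Q\<^esub> lam y"
    using ry by (simp flip: L.lam_add[OF r y] L.lam_mult[OF rees_t_carrier y])
  also have "\<dots> = lam r"
    using L.lam_closed[OF r] L.lam_closed[OF y] by algebra
  finally show ?thesis using y by metis
qed

lemma rho2_annihilated_imp_t_multiple:
  assumes T_homog: "\<forall>g\<in>T. \<exists>d. gr_homog R w g d" and QT: "left_ring_of_fractions Gr T QT alpha"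
    and r: "r \<in> carrier Rees" and r0: "alpha (rho2 R w r) = \<zero>\<^bsub>QT\<^esub>"
  shows "\<exists>s\<in>St_set R w T. \<exists>y\<in>carrier Rees. s \<otimes>\<^bsub>Rees\<^esub> r = rees_t R \<otimes>\<^bsub>Rees\<^esub> y"
proof -
  obtain g where gT: "g \<in> T" and g0: "g \<otimes>\<^bsub>Gr\<^esub> rho2 R w r = \<zero>\<^bsub>Gr\<^esub>"
    using QT rho2_closed[OF r] r0 by (auto simp: left_ring_of_fractions_def)
  obtain d where "gr_homog R w g d" using T_homog gT by blast
  then obtain s where sd: "rees_homog R w s d" and sg: "rho2 R w s = g"
    using gr_homog_lift by blast
  have s: "s \<in> St_set R w T" and sc: "s \<in> carrier Rees"
    using sd sg gT by (auto simp: St_set_def rees_homog_def)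
  have "rho2 R w (s \<otimes>\<^bsub>Rees\<^esub> r) = \<zero>\<^bsub>Gr\<^esub>" using rho2_mult[OF sc r] sg g0 by simp
  then obtain y where "y \<in> carrier Rees" and "rees_t R \<otimes>\<^bsub>Rees\<^esub> y = s \<otimes>\<^bsub>Rees\<^esub> r"
    using rho2_zero_imp_t_multiple[OF rees_mult_closed[OF sc r]] by blast
  then show ?thesis using s by metis
qed

lemma rho1_extends_to_fractions:
  assumes T: "mult_closed Gr T" and T0: "\<zero>\<^bsub>Gr\<^esub> \<notin> T"
    and QS: "left_ring_of_fractions R (S_set R w T) QS phi"
    and QSt: "left_ring_of_fractions Rees (St_set R w T) QSt lam"
    and S_regular: "\<forall>s\<in>S_set R w T. \<forall>r\<in>carrier R. r \<noteq> \<zero> \<longrightarrow> s \<otimes> r \<noteq> \<zero>"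
  shows "\<exists>rho1' \<in> ring_hom QSt QS.
           (\<forall>s\<in>St_set R w T. \<forall>r\<in>carrier Rees.
              rho1' (inv\<^bsub>QSt\<^esub> (lam s) \<otimes>\<^bsub>QSt\<^esub> lam r) = inv\<^bsub>QS\<^esub> (phi (rho1 R s)) \<otimes>\<^bsub>QS\<^esub> phi (rho1 R r)) \<and>
           a_kernel QSt QS rho1' = {(lam (rees_t R) \<ominus>\<^bsub>QSt\<^esub> \<one>\<^bsub>QSt\<^esub>) \<otimes>\<^bsub>QSt\<^esub> q | q. q \<in> carrier QSt}"
proof -
  have phi: "phi \<in> ring_hom R QS" and QS_ring: "ring QS"
    and phi_Units: "\<And>s. s \<in> S_set R w T \<Longrightarrow> phi s \<in> Units QS"
    and phi_zero: "\<And>r. r \<in> carrier R \<Longrightarrow> phi r = \<zero>\<^bsub>QS\<^esub> \<Longrightarrow> \<exists>s\<in>S_set R w T. s \<otimes> r = \<zero>"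
    using QS by (auto simp: left_ring_of_fractions_def)
  have fractions: "left_fractions Rees QSt (St_set R w T) lam"
    by (rule rees_left_fractions[OF T QSt])
  interpret L: left_fractions_lift Rees QSt "St_set R w T" lam QS "phi \<circ> rho1 R"
    using fractions QS_ring ring_hom_trans[OF rho1_ring_hom phi] phi_Units rho1_St_set[OF _ T0]
    by (intro left_fractions_lift.intro left_fractions_lift_axioms.intro) auto
  interpret H: ring_hom_ring QSt QS L.lift
    by (rule ring_hom_ringI2[OF L.Q.ring_axioms QS_ring L.lift_ring_hom])
  define c where "c = lam (rees_t R) \<ominus>\<^bsub>QSt\<^esub> \<one>\<^bsub>QSt\<^esub>"
  have "a_kernel QSt QS L.lift = {c \<otimes>\<^bsub>QSt\<^esub> q | q. q \<in> carrier QSt}"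
  proof (rule L.kernel_lift_principal)
    show "c \<in> carrier QSt" using L.lam_closed[OF rees_t_carrier] by (simp add: c_def)
    show "\<And>a. a \<in> carrier Rees \<Longrightarrow> c \<otimes>\<^bsub>QSt\<^esub> lam a = lam a \<otimes>\<^bsub>QSt\<^esub> c"
      unfolding c_def by (rule lam_rees_t_minus_one_commute[OF fractions])
    show "L.lift c = \<zero>\<^bsub>QS\<^esub>"
      using L.lam_closed[OF rees_t_carrier] L.lift_lam[OF rees_t_carrier] ring_hom_one[OF phi]
      by (simp add: c_def rho1_rees_t L.Q'.r_neg L.Q.minus_eq L.Q'.minus_eq)
    fix r assume r: "r \<in> carrier Rees" and "(phi \<circ> rho1 R) r = \<zero>\<^bsub>QS\<^esub>"
    then have "rho1 R r = \<zero>"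
      using phi_zero[OF rho1_closed[OF r]] S_regular rho1_closed[OF r] by auto
    then obtain y where "y \<in> carrier Rees" and "lam r = c \<otimes>\<^bsub>QSt\<^esub> lam y"
      using lam_rho1_zero[OF fractions r] unfolding c_def by blast
    moreover have "lam (\<one>\<^bsub>Rees\<^esub> \<otimes>\<^bsub>Rees\<^esub> r) = lam r"
      using L.one_S L.S_carrier r L.lam_closed[OF r] by (simp add: L.lam_mult ring_hom_one[OF L.lam_hom])
    ultimately show "\<exists>s\<in>St_set R w T. \<exists>y\<in>carrier Rees. lam (s \<otimes>\<^bsub>Rees\<^esub> r) = c \<otimes>\<^bsub>QSt\<^esub> lam y"
      using L.one_S by metis
  qed
  then show ?thesis
    using L.lift_ring_hom L.lift_fraction by (auto simp: c_def)
qed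

lemma rho2_extends_to_fractions:
  assumes T: "mult_closed Gr T" and T_homog: "\<forall>g\<in>T. \<exists>d. gr_homog R w g d"
    and QT: "left_ring_of_fractions Gr T QT alpha"
    and QSt: "left_ring_of_fractions Rees (St_set R w T) QSt lam"
  shows "\<exists>rho2' \<in> ring_hom QSt QT.
           (\<forall>s\<in>St_set R w T. \<forall>r\<in>carrier Rees.
              rho2' (inv\<^bsub>QSt\<^esub> (lam s) \<otimes>\<^bsub>QSt\<^esub> lam r)
                = inv\<^bsub>QT\<^esub> (alpha (rho2 R w s)) \<otimes>\<^bsub>QT\<^esub> alpha (rho2 R w r)) \<and>
           a_kernel QSt QT rho2' = {lam (rees_t R) \<otimes>\<^bsub>QSt\<^esub> q | q. q \<in> carrier QSt} \<and>
           (\<forall>n. rho2' ` frac_deg_part QSt lam (St_set R w T) (rees_homog R w) n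
                  \<subseteq> frac_deg_part QT alpha T (gr_homog R w) n)"
proof -
  have alpha: "alpha \<in> ring_hom Gr QT" and QT_ring: "ring QT"
    and alpha_Units: "\<And>g. g \<in> T \<Longrightarrow> alpha g \<in> Units QT"
    using QT by (auto simp: left_ring_of_fractions_def)
  have fractions: "left_fractions Rees QSt (St_set R w T) lam"
    by (rule rees_left_fractions[OF T QSt])
  interpret L: left_fractions_lift Rees QSt "St_set R w T" lam QT "alpha \<circ> rho2 R w"
    using fractions QT_ring ring_hom_trans[OF rho2_ring_hom alpha] alpha_Units
    by (intro left_fractions_lift.intro left_fractions_lift_axioms.intro) (auto simp: St_set_def)
  have t: "lam (rees_t R) \<in> carrier QSt" by (rule L.lam_closed[OF rees_t_carrier])
  have "a_kernel QSt QT L.lift = {lam (rees_t R) \<otimes>\<^bsub>QSt\<^esub> q | q. q \<in> carrier QSt}"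
  proof (rule L.kernel_lift_principal[OF t lam_rees_t_commute[OF fractions]])
    have "rho2 R w (rees_t R) = rho2 R w \<zero>\<^bsub>Rees\<^esub>"
      using rho2_eq_zero_iff[OF L.A.zero_closed] by (simp add: rho2_rees_t rees_zero zero_Fl)
    then show "L.lift (lam (rees_t R)) = \<zero>\<^bsub>QT\<^esub>"
      using L.lift_lam[OF rees_t_carrier]
        ring_hom_zero_abelian_group[OF L.psi_hom rees_abelian_group QT_ring] by simp
  next
    fix r assume r: "r \<in> carrier Rees" and "(alpha \<circ> rho2 R w) r = \<zero>\<^bsub>QT\<^esub>"
    then obtain s y where "s \<in> St_set R w T" "y \<in> carrier Rees" "s \<otimes>\<^bsub>Rees\<^esub> r = rees_t R \<otimes>\<^bsub>Rees\<^esub> y"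
      using rho2_annihilated_imp_t_multiple[OF T_homog QT r] by auto
    then show "\<exists>s\<in>St_set R w T. \<exists>y\<in>carrier Rees. lam (s \<otimes>\<^bsub>Rees\<^esub> r) = lam (rees_t R) \<otimes>\<^bsub>QSt\<^esub> lam y"
      using L.lam_mult[OF rees_t_carrier] by metis
  qed
  moreover have "L.lift ` frac_deg_part QSt lam (St_set R w T) (rees_homog R w) n
      \<subseteq> frac_deg_part QT alpha T (gr_homog R w) n" for n
  proof
    fix x assume "x \<in> L.lift ` frac_deg_part QSt lam (St_set R w T) (rees_homog R w) n"
    then obtain s r d where s: "s \<in> St_set R w T" and sd: "rees_homog R w s d"
      and rd: "rees_homog R w r (d + n)" and x: "x = L.lift (inv\<^bsub>QSt\<^esub> (lam s) \<otimes>\<^bsub>QSt\<^esub> lam r)"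
      by (auto simp: frac_deg_part_def)
    have "x = inv\<^bsub>QT\<^esub> (alpha (rho2 R w s)) \<otimes>\<^bsub>QT\<^esub> alpha (rho2 R w r)"
      using L.lift_fraction[OF s] rd by (simp add: x rees_homog_def)
    moreover have "rho2 R w s \<in> T" using s by (simp add: St_set_def)
    ultimately show "x \<in> frac_deg_part QT alpha T (gr_homog R w) n"
      using gr_homog_rho2[OF sd] gr_homog_rho2[OF rd] by (auto simp: frac_deg_part_def)
  qed
  ultimately show ?thesis
    using L.lift_ring_hom L.lift_fraction by (intro bexI[of _ L.lift]) auto
qed

end

theorem proposition1p3p3:
  fixes R :: "('a, 'm) ring_scheme" and w :: "'a \<Rightarrow> ereal"
    and T :: "(int \<Rightarrow> 'a set) set"
    and QT :: "('c, 'p) ring_scheme" and alpha :: "(int \<Rightarrow> 'a set) \<Rightarrow> 'c"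
    and QS :: "('b, 'n) ring_scheme" and phi :: "'a \<Rightarrow> 'b"
    and QSt :: "('d, 'q) ring_scheme" and lam :: "(int \<Rightarrow> 'a) \<Rightarrow> 'd"
  assumes "ring R"
    and "filtration R w" and "separated R w" and "zariskian R w"
    and "mult_closed (gr_ring R w) T" and "left_ore (gr_ring R w) T"
    and "\<forall>g\<in>T. \<exists>d. gr_homog R w g d"
    and "\<zero>\<^bsub>gr_ring R w\<^esub> \<notin> T"
    and "left_ring_of_fractions (gr_ring R w) T QT alpha"
    and "left_ring_of_fractions R (S_set R w T) QS phi"
    and "left_ring_of_fractions (rees_ring R w) (St_set R w T) QSt lam"
    and "\<forall>s\<in>S_set R w T. \<forall>r\<in>carrier R. r \<noteq> \<zero>\<^bsub>R\<^esub> \<longrightarrow> s \<otimes>\<^bsub>R\<^esub> r \<noteq> \<zero>\<^bsub>R\<^esub>"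
  shows "(\<exists>rho1' \<in> ring_hom QSt QS.
            (\<forall>s\<in>St_set R w T. \<forall>r\<in>carrier (rees_ring R w).
               rho1' (inv\<^bsub>QSt\<^esub> (lam s) \<otimes>\<^bsub>QSt\<^esub> lam r)
                 = inv\<^bsub>QS\<^esub> (phi (rho1 R s)) \<otimes>\<^bsub>QS\<^esub> phi (rho1 R r)) \<and>
            a_kernel QSt QS rho1'
              = {(lam (rees_t R) \<ominus>\<^bsub>QSt\<^esub> \<one>\<^bsub>QSt\<^esub>) \<otimes>\<^bsub>QSt\<^esub> q | q. q \<in> carrier QSt})
       \<and> (\<exists>rho2' \<in> ring_hom QSt QT.
            (\<forall>s\<in>St_set R w T. \<forall>r\<in>carrier (rees_ring R w).
               rho2' (inv\<^bsub>QSt\<^esub> (lam s) \<otimes>\<^bsub>QSt\<^esub> lam r)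
                 = inv\<^bsub>QT\<^esub> (alpha (rho2 R w s)) \<otimes>\<^bsub>QT\<^esub> alpha (rho2 R w r)) \<and>
            a_kernel QSt QT rho2'
              = {lam (rees_t R) \<otimes>\<^bsub>QSt\<^esub> q | q. q \<in> carrier QSt} \<and>
            (\<forall>n. rho2' ` frac_deg_part QSt lam (St_set R w T) (rees_homog R w) n
                   \<subseteq> frac_deg_part QT alpha T (gr_homog R w) n))"
proof -
  interpret filtered_ring R w
    using assms(1,2) by (rule filtered_ring.intro[OF _ filtered_ring_axioms.intro])
  show ?thesis
    using rho1_extends_to_fractions[OF assms(5,8,10,11,12)]
      rho2_extends_to_fractions[OF assms(5,7,9,11)] by blast
qed

end
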